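(* Let $(\mathfrak{A},\mathfrak{A}_0)$ be a CQ*-algebra and $\mathfrak{A}_1$ the locally convex $*$-algebra as in the context, let $\omega$ be a $\|\cdot\|$-continuous positive linear functional on $\mathfrak{A}_0$ with GNS construction $(\pi_\omega,\lambda_\omega,\mathcal{H}_\omega)$, and let $\overline{\omega}$ denote (the restriction to $\mathfrak{A}_1$ of) its $\|\cdot\|$-continuous extension, a positive linear functional on $\mathfrak{A}_1$ with GNS construction $(\pi_{\overline{\omega}},\lambda_{\overline{\omega}},\mathcal{H}_{\overline{\omega}})$. Then $\overline{\omega}$ is admissible, i.e. $\pi_{\overline{\omega}}(X)$ is a bounded operator on $\mathcal{H}_{\overline{\omega}}$ for every $X\in\mathfrak{A}_1$, and: (1) $\mathcal{H}_{\overline{\omega}}=\mathcal{H}_\omega$ (i.e. $\lambda_\omega(A)\mapsto\lambda_{\overline{\omega}}(A)$ extends to a unitary identification of $\mathcal{H}_\omega$ with $\mathcal{H}_{\overline{\omega}}$); (2) $\pi_{\overline{\omega}}(A)=\pi_\omega(A)$ and $\lambda_{\overline{\omega}}(A)=\lambda_\omega(A)$ for all $A\in\mathfrak{A}_0$; (3) for every $X\in\mathfrak{A}_1$ there is a sequence $\{A_n\}\subset\mathfrak{A}_0(N)$ for some $N\in\mathbb{N}$ such that $\pi_\omega(A_n)\to\pi_{\overline{\omega}}(X)$ strongly, i.e. $\lim_n\pi_\omega(A_n)x=\pi_{\overline{\omega}}(X)x$ for every $x\in\mathcal{H}_\omega$; consequently $\pi_{\overline{\omega}}(\mathfrak{A}_1)$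 is contained in the bicommutant $\pi_\omega(\mathfrak{A}_0)''$; (4) for every $X\in\mathfrak{A}_1$ there is a sequence $\{A_n\}\subset\mathfrak{A}_0(N)$ for some $N\in\mathbb{N}$ such that $\lim_n\lambda_\omega(A_n)=\lambda_{\overline{\omega}}(X)$.
   Context: Let $\mathfrak{A}_0$ be a unital C*-algebra with C*-norm $\|\cdot\|_0$, and $\|\cdot\|$ another norm on $\mathfrak{A}_0$ with $\|A\|\le\|A\|_0$, $\|AB\|\le\|A\|\,\|B\|_0$, $\|A^*\|=\|A\|$; $\mathfrak{A}$ is the completion of $(\mathfrak{A}_0,\|\cdot\|)$. For $N\in\mathbb{N}$, $\mathfrak{A}_0(N)=\{A\in\mathfrak{A}_0:\|A\|_0\le N\}$, and $\mathfrak{A}_1=\bigcup_N\overline{\mathfrak{A}_0(N)}\subset\mathfrak{A}$ (closures in $\|\cdot\|$), the completion of $\mathfrak{A}_0$ for the inductive limit topology ($A_n\to A$ iff $\{A_n\}\subset\mathfrak{A}_0(N)$ for some $N$ and $\|A_n-A\|\to0$). $\mathfrak{A}_1$ is a *-algebra with product $XY=\|\cdot\|\text{-}\lim A_nB_n$ for $A_n\to X$, $B_n\to Y$ in $\|\cdot\|$ with $\{A_n\},\{B_n\}\subset\mathfrak{A}_0(N)$, and involution the $\|\cdot\|$-continuous extension of that of $\mathfrak{A}_0$. A $\|\cdot\|$-continuous positive linear functional $\omega$ on $\mathfrak{A}_0$ satisfies $\omega(A^*A)\ge0$ and $|\omega(A)|\le\gamma\|A\|$; $\overline{\omega}(X)=\lim\omega(A_n)$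 for $A_n\to X$. GNS construction of $\omega$ on $\mathfrak{A}_0$: $\lambda_\omega:\mathfrak{A}_0\to\mathcal{H}_\omega$ with dense range, $(\lambda_\omega(A)|\lambda_\omega(B))=\omega(B^*A)$, $\pi_\omega(A)\lambda_\omega(B)=\lambda_\omega(AB)$. GNS construction of a positive linear functional $\overline{\omega}$ on the *-algebra $\mathfrak{A}_1$: $\mathcal{H}_{\overline{\omega}}$ is the Hilbert space completion of $\lambda_{\overline{\omega}}(\mathfrak{A}_1)$, where $(\lambda_{\overline{\omega}}(X)|\lambda_{\overline{\omega}}(Y))=\overline{\omega}(Y^*X)$, and $\pi_{\overline{\omega}}(X)\lambda_{\overline{\omega}}(Y)=\lambda_{\overline{\omega}}(XY)$, $X,Y\in\mathfrak{A}_1$. *)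

theory Defs
  imports Complex_Main
begin

text \<open>The type 'a carries the Banach space A (completion of A0 in the
norm nA); A0 is a subset of it, carrying the C*-algebra structure (product mulA,
unit unitA, C*-norm n0A). The involution invA is defined on all of A (continuous extension).\<close>

record 'a cq_data =
  smA :: "complex \<Rightarrow> 'a \<Rightarrow> 'a"
  nA :: "'a \<Rightarrow> real"
  A0 :: "'a set"
  mulA :: "'a \<Rightarrow> 'a \<Rightarrow> 'a"
  invA :: "'a \<Rightarrow> 'a"
  unitA :: "'a"
  n0A :: "'a \<Rightarrow> real"

definition ntends :: "('x::ab_group_add \<Rightarrow> real) \<Rightarrow> (nat \<Rightarrow> 'x) \<Rightarrow> 'x \<Rightarrow> bool" where
  "ntends nm f x \<longleftrightarrow> (\<lambda>k. nm (f k - x)) \<longlonglongrightarrow> 0"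

definition ncauchy :: "('x::ab_group_add \<Rightarrow> real) \<Rightarrow> (nat \<Rightarrow> 'x) \<Rightarrow> bool" where
  "ncauchy nm f \<longleftrightarrow> (\<forall>e>0. \<exists>M. \<forall>i\<ge>M. \<forall>j\<ge>M. nm (f i - f j) < e)"

definition nclosure :: "('x::ab_group_add \<Rightarrow> real) \<Rightarrow> 'x set \<Rightarrow> 'x set" where
  "nclosure nm S = {x. \<exists>f. (\<forall>k. f k \<in> S) \<and> ntends nm f x}"

definition cvec_space :: "(complex \<Rightarrow> 'x::ab_group_add \<Rightarrow> 'x) \<Rightarrow> bool" where
  "cvec_space sm \<longleftrightarrow> (\<forall>x. sm 1 x = x) \<and> (\<forall>a b x. sm a (sm b x) = sm (a * b) x)
     \<and> (\<forall>a b x. sm (a + b) x = sm a x + sm b x) \<and> (\<forall>a x y. sm a (x + y) = sm a x + sm a y)"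

definition csubspace :: "(complex \<Rightarrow> 'x::ab_group_add \<Rightarrow> 'x) \<Rightarrow> 'x set \<Rightarrow> bool" where
  "csubspace sm S \<longleftrightarrow> 0 \<in> S \<and> (\<forall>x\<in>S. \<forall>y\<in>S. x + y \<in> S) \<and> (\<forall>c. \<forall>x\<in>S. sm c x \<in> S)"

definition norm_on :: "(complex \<Rightarrow> 'x::ab_group_add \<Rightarrow> 'x) \<Rightarrow> ('x \<Rightarrow> real) \<Rightarrow> 'x set \<Rightarrow> bool" where
  "norm_on sm nm S \<longleftrightarrow> (\<forall>x\<in>S. \<forall>y\<in>S. nm (x + y) \<le> nm x + nm y)
     \<and> (\<forall>c. \<forall>x\<in>S. nm (sm c x) = cmod c * nm x)
     \<and> (\<forall>x\<in>S. nm x \<ge> 0 \<and> (nm x = 0 \<longleftrightarrow> x = 0))"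

definition CQ_setting :: "('a::ab_group_add, 'b) cq_data_scheme \<Rightarrow> bool" where
  "CQ_setting D \<longleftrightarrow>
     cvec_space (smA D) \<and> norm_on (smA D) (nA D) UNIV
   \<and> (\<forall>f. ncauchy (nA D) f \<longrightarrow> (\<exists>x. ntends (nA D) f x))
   \<and> csubspace (smA D) (A0 D) \<and> nclosure (nA D) (A0 D) = UNIV
   \<and> unitA D \<in> A0 D
   \<and> (\<forall>a\<in>A0 D. \<forall>b\<in>A0 D. mulA D a b \<in> A0 D)
   \<and> (\<forall>a\<in>A0 D. invA D a \<in> A0 D)
   \<and> (\<forall>a\<in>A0 D. \<forall>b\<in>A0 D. \<forall>c\<in>A0 D. mulA D (mulA D a b) c = mulA D a (mulA D b c))
   \<and> (\<forall>a\<in>A0 D. \<forall>b\<in>A0 D. \<forall>c\<in>A0 D. mulA D a (b + c) = mulA D a b + mulA D a c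
                                      \<and> mulA D (a + b) c = mulA D a c + mulA D b c)
   \<and> (\<forall>z. \<forall>a\<in>A0 D. \<forall>b\<in>A0 D. mulA D (smA D z a) b = smA D z (mulA D a b)
                              \<and> mulA D a (smA D z b) = smA D z (mulA D a b))
   \<and> (\<forall>a\<in>A0 D. mulA D (unitA D) a = a \<and> mulA D a (unitA D) = a)
   \<and> (\<forall>x y. invA D (x + y) = invA D x + invA D y)
   \<and> (\<forall>z x. invA D (smA D z x) = smA D (cnj z) (invA D x))
   \<and> (\<forall>x. invA D (invA D x) = x)
   \<and> (\<forall>a\<in>A0 D. \<forall>b\<in>A0 D. invA D (mulA D a b) = mulA D (invA D b) (invA D a))
   \<and> norm_on (smA D) (n0A D) (A0 D)
   \<and> (\<forall>a\<in>A0 D. \<forall>b\<in>A0 D. n0A D (mulA D a b) \<le> n0A D a * n0A D b)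
   \<and> (\<forall>a\<in>A0 D. n0A D (mulA D (invA D a) a) = (n0A D a)\<^sup>2)
   \<and> (\<forall>f. (\<forall>k. f k \<in> A0 D) \<and> ncauchy (n0A D) f \<longrightarrow> (\<exists>x\<in>A0 D. ntends (n0A D) f x))
   \<and> (\<forall>a\<in>A0 D. nA D a \<le> n0A D a)
   \<and> (\<forall>a\<in>A0 D. \<forall>b\<in>A0 D. nA D (mulA D a b) \<le> nA D a * n0A D b)
   \<and> (\<forall>x. nA D (invA D x) = nA D x)"

definition A0N :: "('a, 'b) cq_data_scheme \<Rightarrow> nat \<Rightarrow> 'a set" where
  "A0N D N = {a \<in> A0 D. n0A D a \<le> real N}"

definition A1 :: "('a::ab_group_add, 'b) cq_data_scheme \<Rightarrow> 'a set" where
  "A1 D = (\<Union>N. nclosure (nA D) (A0N D N))"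

definition prod1 :: "('a::ab_group_add, 'b) cq_data_scheme \<Rightarrow> 'a \<Rightarrow> 'a \<Rightarrow> 'a" where
  "prod1 D X Y = (THE Z. \<exists>N f g. (\<forall>k. f k \<in> A0N D N \<and> g k \<in> A0N D N)
      \<and> ntends (nA D) f X \<and> ntends (nA D) g Y
      \<and> ntends (nA D) (\<lambda>k. mulA D (f k) (g k)) Z)"

definition pos_functional :: "('a::ab_group_add, 'b) cq_data_scheme \<Rightarrow> ('a \<Rightarrow> complex) \<Rightarrow> bool" where
  "pos_functional D \<omega> \<longleftrightarrow>
     (\<forall>a\<in>A0 D. \<forall>b\<in>A0 D. \<omega> (a + b) = \<omega> a + \<omega> b)
   \<and> (\<forall>z. \<forall>a\<in>A0 D. \<omega> (smA D z a) = z * \<omega> a)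
   \<and> (\<forall>a\<in>A0 D. Im (\<omega> (mulA D (invA D a) a)) = 0 \<and> Re (\<omega> (mulA D (invA D a) a)) \<ge> 0)
   \<and> (\<exists>\<gamma>. \<forall>a\<in>A0 D. cmod (\<omega> a) \<le> \<gamma> * nA D a)"

definition omegabar :: "('a::ab_group_add, 'b) cq_data_scheme \<Rightarrow> ('a \<Rightarrow> complex) \<Rightarrow> 'a \<Rightarrow> complex" where
  "omegabar D \<omega> X = (THE c. \<exists>f. (\<forall>k. f k \<in> A0 D) \<and> ntends (nA D) f X \<and> (\<lambda>k. \<omega> (f k)) \<longlonglongrightarrow> c)"

text \<open>Complex Hilbert spaces: inner product linear in the first argument.\<close>
record 'h hspace =
  hsm :: "complex \<Rightarrow> 'h \<Rightarrow> 'h"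
  hip :: "'h \<Rightarrow> 'h \<Rightarrow> complex"

definition hnorm :: "('h, 'b) hspace_scheme \<Rightarrow> 'h \<Rightarrow> real" where
  "hnorm H x = sqrt (Re (hip H x x))"

definition is_chilbert :: "('h::ab_group_add, 'b) hspace_scheme \<Rightarrow> bool" where
  "is_chilbert H \<longleftrightarrow> cvec_space (hsm H)
   \<and> (\<forall>x y z. hip H (x + y) z = hip H x z + hip H y z)
   \<and> (\<forall>c x y. hip H (hsm H c x) y = c * hip H x y)
   \<and> (\<forall>x y. hip H y x = cnj (hip H x y))
   \<and> (\<forall>x. x \<noteq> 0 \<longrightarrow> Re (hip H x x) > 0)
   \<and> (\<forall>f. ncauchy (hnorm H) f \<longrightarrow> (\<exists>x. ntends (hnorm H) f x))"

definition bounded_op :: "('h::ab_group_add, 'b) hspace_scheme \<Rightarrow> ('h \<Rightarrow> 'h) \<Rightarrow> bool" where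
  "bounded_op H T \<longleftrightarrow> (\<forall>x y. T (x + y) = T x + T y) \<and> (\<forall>c x. T (hsm H c x) = hsm H c (T x))
     \<and> (\<exists>C. \<forall>x. hnorm H (T x) \<le> C * hnorm H x)"

definition unitary_map :: "('h::ab_group_add, 'b) hspace_scheme \<Rightarrow> ('k::ab_group_add, 'c) hspace_scheme \<Rightarrow> ('h \<Rightarrow> 'k) \<Rightarrow> bool" where
  "unitary_map H K U \<longleftrightarrow> bij U \<and> (\<forall>x y. U (x + y) = U x + U y) \<and> (\<forall>c x. U (hsm H c x) = hsm K c (U x))
     \<and> (\<forall>x y. hip K (U x) (U y) = hip H x y)"

definition op_ext :: "('h::ab_group_add, 'b) hspace_scheme \<Rightarrow> ('h \<Rightarrow> 'h) \<Rightarrow> 'h set \<Rightarrow> 'h \<Rightarrow> 'h" where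
  "op_ext H T S x = (THE y. \<exists>f. (\<forall>k. f k \<in> S) \<and> ntends (hnorm H) f x \<and> ntends (hnorm H) (\<lambda>k. T (f k)) y)"

definition in_bicommutant :: "('h::ab_group_add, 'b) hspace_scheme \<Rightarrow> ('h \<Rightarrow> 'h) set \<Rightarrow> ('h \<Rightarrow> 'h) \<Rightarrow> bool" where
  "in_bicommutant H S T \<longleftrightarrow> (\<forall>B. bounded_op H B \<and> (\<forall>P\<in>S. \<forall>x. B (P x) = P (B x))
       \<longrightarrow> (\<forall>x. B (T x) = T (B x)))"

definition is_GNS0 :: "('a::ab_group_add, 'b) cq_data_scheme \<Rightarrow> ('a \<Rightarrow> complex) \<Rightarrow> ('h::ab_group_add, 'c) hspace_scheme
     \<Rightarrow> ('a \<Rightarrow> 'h) \<Rightarrow> ('a \<Rightarrow> 'h \<Rightarrow> 'h) \<Rightarrow> bool" where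
  "is_GNS0 D \<omega> H lam p \<longleftrightarrow> is_chilbert H
   \<and> (\<forall>a\<in>A0 D. \<forall>b\<in>A0 D. lam (a + b) = lam a + lam b)
   \<and> (\<forall>z. \<forall>a\<in>A0 D. lam (smA D z a) = hsm H z (lam a))
   \<and> nclosure (hnorm H) (lam ` A0 D) = UNIV
   \<and> (\<forall>a\<in>A0 D. \<forall>b\<in>A0 D. hip H (lam a) (lam b) = \<omega> (mulA D (invA D b) a))
   \<and> (\<forall>a\<in>A0 D. bounded_op H (p a))
   \<and> (\<forall>a\<in>A0 D. \<forall>b\<in>A0 D. p a (lam b) = lam (mulA D a b))"

text \<open>GNS construction of omegabar on the *-algebra A1; p X is only prescribed on lam ` A1.\<close>
definition is_GNS1 :: "('a::ab_group_add, 'b) cq_data_scheme \<Rightarrow> ('a \<Rightarrow> complex) \<Rightarrow> ('k::ab_group_add, 'c) hspace_scheme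
     \<Rightarrow> ('a \<Rightarrow> 'k) \<Rightarrow> ('a \<Rightarrow> 'k \<Rightarrow> 'k) \<Rightarrow> bool" where
  "is_GNS1 D \<omega> K lam p \<longleftrightarrow> is_chilbert K
   \<and> (\<forall>X\<in>A1 D. \<forall>Y\<in>A1 D. lam (X + Y) = lam X + lam Y)
   \<and> (\<forall>z. \<forall>X\<in>A1 D. lam (smA D z X) = hsm K z (lam X))
   \<and> nclosure (hnorm K) (lam ` A1 D) = UNIV
   \<and> (\<forall>X\<in>A1 D. \<forall>Y\<in>A1 D. hip K (lam X) (lam Y) = omegabar D \<omega> (prod1 D (invA D Y) X))
   \<and> (\<forall>X\<in>A1 D. \<forall>Y\<in>A1 D. p X (lam Y) = lam (prod1 D X Y))"

end

theory Submission
  imports Defs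
begin

(*
  The heart of the matter is that the GNS representation of the C*-algebra A0 is contractive,
  ||pi_omega(a) x|| <= ||a||_0 ||x||. Without functional calculus this follows from a growth
  argument: for self-adjoint h the numbers t_k = ||lambda_omega(h^k b)|| satisfy
  t_m^2 <= t_2m t_0 (Cauchy-Schwarz) and t_k^2 <= G ||h||_0^2k (continuity of omega),
  which forces t_1 <= ||h||_0 t_0; the C*-identity then gives the bound for arbitrary a.

  If A_n in A0(N) converges to X in the norm of A, the operators pi_omega(A_n) are therefore
  bounded by N, and they converge on the dense set lambda_omega(A0) because
  ||lambda_omega(c)||^2 <= gamma ||c|| ||c||_0; so they converge strongly to an operator
  pi(X) of norm at most N. The inner products of lambda_omegabar are limits of those of
  lambda_omega, so lambda_omega(A) |-> lambda_omegabar(A) is isometric on A0 with dense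
  range on both sides and extends to a unitary U. Under U, pi_omegabar(X) becomes pi(X),
  which yields admissibility, the approximation statements and, as a strong limit of
  operators in pi_omega(A0), membership in the bicommutant.
*)

section \<open>Convergence with respect to an abstract norm\<close>

lemma LIMSEQ_zero_if_norm_le:
  fixes a :: "nat \<Rightarrow> 'a::real_normed_vector"
  assumes "\<And>k. norm (a k) \<le> b k" "b \<longlonglongrightarrow> 0"
  shows "a \<longlonglongrightarrow> 0"
proof -
  have "(\<lambda>k. norm (a k)) \<longlonglongrightarrow> 0"
    using assms by (intro tendsto_sandwich[of "\<lambda>_. 0" "\<lambda>k. norm (a k)" sequentially b 0]) auto
  then show ?thesis
    by (simp add: tendsto_norm_zero_iff)
qed

locale group_norm =
  fixes nm :: "'x::ab_group_add \<Rightarrow> real"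
  assumes triangle: "nm (x + y) \<le> nm x + nm y"
    and nonneg: "0 \<le> nm x"
    and eq_0_iff: "nm x = 0 \<longleftrightarrow> x = 0"
    and minus: "nm (- x) = nm x"
begin

lemma zero [simp]: "nm 0 = 0"
  using eq_0_iff by simp

lemma diff_commute: "nm (x - y) = nm (y - x)"
  using minus[of "x - y"] by simp

lemma triangle_diff: "nm (x - z) \<le> nm (x - y) + nm (y - z)"
  using triangle[of "x - y" "y - z"] by simp

lemma diff_le: "nm (x - y) \<le> nm x + nm y"
  using triangle[of x "- y"] minus[of y] by simp

lemma ntends_iff: "ntends nm f x \<longleftrightarrow> (\<forall>e>0. \<exists>M. \<forall>k\<ge>M. nm (f k - x) < e)"
  unfolding ntends_def LIMSEQ_iff using nonneg by simp

lemma ntends_bound: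
  assumes "\<And>k. nm (f k - x) \<le> b k" "b \<longlonglongrightarrow> 0"
  shows "ntends nm f x"
  unfolding ntends_def using assms(1) nonneg by (intro LIMSEQ_zero_if_norm_le[OF _ assms(2)]) auto

lemma ntends_const: "ntends nm (\<lambda>k. x) x"
  unfolding ntends_def by simp

lemma ntends_transfer:
  assumes "ntends nm f x" "(\<lambda>k. nm (g k - f k)) \<longlonglongrightarrow> 0"
  shows "ntends nm g x"
proof (rule ntends_bound)
  show "nm (g k - x) \<le> nm (g k - f k) + nm (f k - x)" for k
    by (rule triangle_diff)
  show "(\<lambda>k. nm (g k - f k) + nm (f k - x)) \<longlonglongrightarrow> 0"
    using tendsto_add[OF assms(2) assms(1)[unfolded ntends_def]] by simp
qed

lemma ntends_unique:
  assumes "ntends nm f x" "ntends nm f y"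
  shows "x = y"
proof -
  have "ntends nm (\<lambda>k. x) y"
    by (rule ntends_transfer[OF assms(2)])
       (use assms(1) in \<open>simp add: ntends_def diff_commute\<close>)
  then have "(\<lambda>k. nm (x - y)) \<longlonglongrightarrow> 0"
    by (simp add: ntends_def)
  then have "nm (x - y) = 0"
    by (simp add: LIMSEQ_const_iff)
  then show ?thesis
    using eq_0_iff by simp
qed

lemma ntends_add:
  assumes "ntends nm f x" "ntends nm g y"
  shows "ntends nm (\<lambda>k. f k + g k) (x + y)"
proof (rule ntends_bound)
  show "nm (f k + g k - (x + y)) \<le> nm (f k - x) + nm (g k - y)" for k
    using triangle[of "f k - x" "g k - y"] by (simp add: algebra_simps)
  show "(\<lambda>k. nm (f k - x) + nm (g k - y)) \<longlonglongrightarrow> 0"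
    using tendsto_add[OF assms[unfolded ntends_def]] by simp
qed

lemma ntends_diff:
  assumes "ntends nm f x" "ntends nm g y"
  shows "ntends nm (\<lambda>k. f k - g k) (x - y)"
proof -
  have "ntends nm (\<lambda>k. - g k) (- y)"
    using assms(2) minus[of "g _ - y"] by (simp add: ntends_def)
  from ntends_add[OF assms(1) this] show ?thesis
    by simp
qed

lemma ntends_norm:
  assumes "ntends nm f x"
  shows "(\<lambda>k. nm (f k)) \<longlonglongrightarrow> nm x"
proof -
  have "\<bar>nm (f k) - nm x\<bar> \<le> nm (f k - x)" for k
    using triangle_diff[of "f k" 0 x] triangle_diff[of x 0 "f k"] diff_commute[of x "f k"] minus
    by (simp add: abs_le_iff)
  then have "(\<lambda>k. nm (f k) - nm x) \<longlonglongrightarrow> 0"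
    by (intro LIMSEQ_zero_if_norm_le[OF _ assms[unfolded ntends_def]]) auto
  then show ?thesis
    by (simp add: LIM_zero_iff)
qed

lemma ntends_imp_ncauchy:
  assumes "ntends nm f x"
  shows "ncauchy nm f"
  unfolding ncauchy_def
proof (intro allI impI)
  fix e :: real
  assume "e > 0"
  then obtain M where M: "\<forall>k\<ge>M. nm (f k - x) < e / 2"
    using assms unfolding ntends_iff by (meson half_gt_zero)
  have "nm (f i - f j) < e" if "i \<ge> M" "j \<ge> M" for i j
  proof -
    have "nm (f i - x) < e / 2" "nm (f j - x) < e / 2"
      using M that by auto
    then show ?thesis
      using triangle_diff[of "f i" "f j" x] diff_commute[of x "f j"] by linarith
  qed
  then show "\<exists>M. \<forall>i\<ge>M. \<forall>j\<ge>M. nm (f i - f j) < e"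
    by blast
qed

lemma nclosure_dense_trans:
  assumes dense: "nclosure nm T = UNIV" and approx: "T \<subseteq> nclosure nm S"
  shows "nclosure nm S = UNIV"
proof -
  have "y \<in> nclosure nm S" for y
  proof -
    obtain t where t: "\<forall>n. t n \<in> T" "ntends nm t y"
      using dense unfolding nclosure_def by blast
    have "\<exists>s\<in>S. nm (s - t n) < inverse (real (Suc n))" for n
    proof -
      obtain f where f: "\<forall>k. f k \<in> S" "ntends nm f (t n)"
        using approx t(1) unfolding nclosure_def by blast
      moreover have "inverse (real (Suc n)) > 0"
        by simp
      ultimately obtain M where "nm (f M - t n) < inverse (real (Suc n))"
        unfolding ntends_iff by blast
      with f(1) show ?thesis
        by blast
    qed
    then obtain s where s: "\<forall>n. s n \<in> S \<and> nm (s n - t n) < inverse (real (Suc n))"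
      by metis
    have "(\<lambda>n. nm (s n - t n)) \<longlonglongrightarrow> 0"
      by (rule LIMSEQ_zero_if_norm_le[OF _ LIMSEQ_inverse_real_of_nat]) (use s nonneg in
          \<open>simp add: less_imp_le\<close>)
    with t(2) have "ntends nm s y"
      by (rule ntends_transfer)
    with s show ?thesis
      unfolding nclosure_def by blast
  qed
  then show ?thesis
    by blast
qed

end

lemma ncauchy_dominated:
  assumes f: "ncauchy nm1 f" and g: "ncauchy nm1 g" and C: "0 \<le> C"
    and bound: "\<And>i j. nm2 (h i - h j) \<le> C * (nm1 (f i - f j) + nm1 (g i - g j))"
  shows "ncauchy nm2 h"
  unfolding ncauchy_def
proof (intro allI impI)
  fix e :: real
  assume e: "e > 0"
  define e' where "e' = e / (2 * (C + 1))"
  have e': "e' > 0"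
    using e C by (simp add: e'_def)
  obtain M1 where M1: "\<forall>i\<ge>M1. \<forall>j\<ge>M1. nm1 (f i - f j) < e'"
    using f e' unfolding ncauchy_def by blast
  obtain M2 where M2: "\<forall>i\<ge>M2. \<forall>j\<ge>M2. nm1 (g i - g j) < e'"
    using g e' unfolding ncauchy_def by blast
  have "nm2 (h i - h j) < e" if "i \<ge> max M1 M2" "j \<ge> max M1 M2" for i j
  proof -
    have "nm1 (f i - f j) + nm1 (g i - g j) \<le> 2 * e'"
      using M1 M2 that by force
    then have "C * (nm1 (f i - f j) + nm1 (g i - g j)) \<le> C * (2 * e')"
      by (rule mult_left_mono[OF _ C])
    with bound[of i j] have "nm2 (h i - h j) \<le> C * (2 * e')"
      by (rule order_trans)
    also have "\<dots> < e"
      using C e by (simp add: e'_def field_simps)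
    finally show ?thesis .
  qed
  then show "\<exists>M. \<forall>i\<ge>M. \<forall>j\<ge>M. nm2 (h i - h j) < e"
    by blast
qed

lemma nclosure_image_seq:
  assumes "x \<in> nclosure nm (g ` S)"
  obtains s where "\<And>k. s k \<in> S" "ntends nm (\<lambda>k. g (s k)) x"
proof -
  obtain f where f: "\<forall>k. f k \<in> g ` S" "ntends nm f x"
    using assms unfolding nclosure_def by blast
  then have "\<forall>k. \<exists>t. t \<in> S \<and> f k = g t"
    by blast
  then obtain s where s: "\<forall>k. s k \<in> S \<and> f k = g (s k)"
    by metis
  then have "f = (\<lambda>k. g (s k))"
    by auto
  with s f(2) show ?thesis
    using that[of s] by simp
qed

section \<open>Complex inner product spaces\<close>

locale chilbert =
  fixes H :: "('h::ab_group_add, 'b) hspace_scheme"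
  assumes is_chilbert: "is_chilbert H"
begin

lemma hip_add_left: "hip H (x + y) z = hip H x z + hip H y z"
  using is_chilbert unfolding is_chilbert_def by blast

lemma hip_scale_left: "hip H (hsm H c x) y = c * hip H x y"
  using is_chilbert unfolding is_chilbert_def by blast

lemma hip_commute: "hip H y x = cnj (hip H x y)"
  using is_chilbert unfolding is_chilbert_def by blast

lemma hip_self_pos: "x \<noteq> 0 \<Longrightarrow> Re (hip H x x) > 0"
  using is_chilbert unfolding is_chilbert_def by blast

lemma complete: "ncauchy (hnorm H) f \<Longrightarrow> \<exists>x. ntends (hnorm H) f x"
  using is_chilbert unfolding is_chilbert_def by blast

lemma hip_add_right: "hip H z (x + y) = hip H z x + hip H z y"
  using hip_commute[of z "x + y"] hip_add_left[of x y z] hip_commute[of z x] hip_commute[of z y]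
  by simp

lemma hip_scale_right: "hip H x (hsm H c y) = cnj c * hip H x y"
  using hip_commute[of x "hsm H c y"] hip_scale_left[of c y x] hip_commute[of x y] by simp

lemma hip_diff_left: "hip H (x - y) z = hip H x z - hip H y z"
  using hip_add_left[of "x - y" y z] by simp

lemma hip_diff_right: "hip H z (x - y) = hip H z x - hip H z y"
  using hip_add_right[of z "x - y" y] by simp

lemma hip_zero_left [simp]: "hip H 0 y = 0"
  using hip_diff_left[of 0 0 y] by simp

lemma hip_zero_right [simp]: "hip H y 0 = 0"
  using hip_diff_right[of y 0 0] by simp

lemma hip_minus_left: "hip H (- x) y = - hip H x y"
  using hip_diff_left[of 0 x y] by simp

lemma hip_minus_right: "hip H y (- x) = - hip H y x"
  using hip_diff_right[of y 0 x] by simp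

lemma hip_self_diff: "hip H (x - y) (x - y) = hip H x x - hip H x y - hip H y x + hip H y y"
  by (simp add: hip_diff_left hip_diff_right)

lemma Im_hip_self: "Im (hip H x x) = 0"
  using arg_cong[OF hip_commute[of x x], of Im] by simp

lemma Re_hip_self_nonneg: "0 \<le> Re (hip H x x)"
  using hip_self_pos[of x] by (cases "x = 0") auto

lemma hnorm_nonneg: "0 \<le> hnorm H x"
  by (simp add: hnorm_def Re_hip_self_nonneg)

lemma hnorm_square: "(hnorm H x)\<^sup>2 = Re (hip H x x)"
  unfolding hnorm_def using Re_hip_self_nonneg by simp

lemma hnorm_eq_0_iff: "hnorm H x = 0 \<longleftrightarrow> x = 0"
  using hip_self_pos[of x] by (cases "x = 0") (auto simp: hnorm_def)

lemma hnorm_minus: "hnorm H (- x) = hnorm H x"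
  by (simp add: hnorm_def hip_minus_left hip_minus_right)

lemma Cauchy_Schwarz: "cmod (hip H x y) \<le> hnorm H x * hnorm H y"
proof (cases "y = 0")
  case True
  then show ?thesis by (simp add: hnorm_def)
next
  case False
  define p where "p = Re (hip H y y)"
  define a where "a = hip H x y"
  define c where "c = a / complex_of_real p"
  have p: "p > 0"
    using hip_self_pos[OF False] by (simp add: p_def)
  have hyy: "hip H y y = complex_of_real p"
    using Im_hip_self by (simp add: p_def complex_eq_iff)
  have hyx: "hip H y x = cnj a"
    using hip_commute[of x y] by (simp add: a_def)
  have aa: "cnj a * a = complex_of_real ((cmod a)\<^sup>2)"
    using complex_norm_square[of a] by (simp add: mult.commute)
  have "hip H (x - hsm H c y) (x - hsm H c y)
      = hip H x x - cnj c * a - c * cnj a + c * cnj c * complex_of_real p"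
    by (simp add: hip_self_diff hip_scale_left hip_scale_right a_def hyx hyy)
  also have "\<dots> = hip H x x - complex_of_real ((cmod a)\<^sup>2 / p)"
    using aa p by (simp add: c_def divide_simps mult.commute)
  finally have "0 \<le> Re (hip H x x) - (cmod a)\<^sup>2 / p"
    using Re_hip_self_nonneg[of "x - hsm H c y"] by simp
  then have "(cmod a)\<^sup>2 \<le> Re (hip H x x) * p"
    using p by (simp add: field_simps)
  also have "\<dots> = (hnorm H x * hnorm H y)\<^sup>2"
    by (simp add: hnorm_square p_def power_mult_distrib)
  finally show ?thesis
    unfolding a_def by (rule power2_le_imp_le) (simp add: hnorm_nonneg)
qed

lemma hnorm_triangle: "hnorm H (x + y) \<le> hnorm H x + hnorm H y"
proof -
  have "(hnorm H (x + y))\<^sup>2 = Re (hip H x x) + 2 * Re (hip H x y) + Re (hip H y y)"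
    using hip_commute[of y x] by (simp add: hnorm_square hip_add_left hip_add_right)
  also have "Re (hip H x y) \<le> hnorm H x * hnorm H y"
    using Cauchy_Schwarz[of x y] complex_Re_le_cmod[of "hip H x y"] by linarith
  finally have "(hnorm H (x + y))\<^sup>2 \<le> (hnorm H x + hnorm H y)\<^sup>2"
    by (simp add: hnorm_square[symmetric] power2_sum)
  then show ?thesis
    by (rule power2_le_imp_le) (simp add: hnorm_nonneg)
qed

sublocale hn: group_norm "hnorm H"
  by unfold_locales (auto simp: hnorm_triangle hnorm_nonneg hnorm_eq_0_iff hnorm_minus)

lemma hip_tendsto:
  assumes "ntends (hnorm H) f x" "ntends (hnorm H) g y"
  shows "(\<lambda>k. hip H (f k) (g k)) \<longlonglongrightarrow> hip H x y"
proof -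
  have bound: "cmod (hip H (f k) (g k) - hip H x y)
      \<le> hnorm H (f k - x) * hnorm H (g k) + hnorm H x * hnorm H (g k - y)" for k
  proof -
    have "hip H (f k) (g k) - hip H x y = hip H (f k - x) (g k) + hip H x (g k - y)"
      by (simp add: hip_diff_left hip_diff_right)
    then have "cmod (hip H (f k) (g k) - hip H x y)
        \<le> cmod (hip H (f k - x) (g k)) + cmod (hip H x (g k - y))"
      by (simp add: norm_triangle_ineq)
    also have "\<dots> \<le> hnorm H (f k - x) * hnorm H (g k) + hnorm H x * hnorm H (g k - y)"
      by (intro add_mono Cauchy_Schwarz)
    finally show ?thesis .
  qed
  have "(\<lambda>k. hnorm H (f k - x) * hnorm H (g k) + hnorm H x * hnorm H (g k - y))
      \<longlonglongrightarrow> 0 * hnorm H y + hnorm H x * 0"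
    using assms unfolding ntends_def by (intro tendsto_intros hn.ntends_norm[OF assms(2)])
  then have "(\<lambda>k. hip H (f k) (g k) - hip H x y) \<longlonglongrightarrow> 0"
    by (intro LIMSEQ_zero_if_norm_le[OF bound]) simp
  then show ?thesis
    by (simp add: LIM_zero_iff)
qed

lemma hip_eq_imp_eq:
  assumes "\<And>z. hip H a z = hip H b z"
  shows "a = b"
  using assms[of "a - b"] hip_self_pos[of "a - b"] by (auto simp: hip_diff_left)

lemma bounded_op_add: "bounded_op H T \<Longrightarrow> T (x + y) = T x + T y"
  by (simp add: bounded_op_def)

lemma bounded_op_diff: "bounded_op H T \<Longrightarrow> T (x - y) = T x - T y"
  using bounded_op_add[of T "x - y" y] by (simp add: algebra_simps)

lemma bounded_op_ntends:
  assumes T: "bounded_op H T" and f: "ntends (hnorm H) f x"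
  shows "ntends (hnorm H) (\<lambda>k. T (f k)) (T x)"
proof -
  obtain C where C: "\<And>y. hnorm H (T y) \<le> C * hnorm H y"
    using T by (auto simp: bounded_op_def)
  show ?thesis
  proof (rule hn.ntends_bound)
    show "hnorm H (T (f k) - T x) \<le> C * hnorm H (f k - x)" for k
      using C[of "f k - x"] bounded_op_diff[OF T] by simp
    show "(\<lambda>k. C * hnorm H (f k - x)) \<longlonglongrightarrow> 0"
      using tendsto_mult_right_zero[OF f[unfolded ntends_def]] .
  qed
qed

lemma ncauchy_uniformly_bounded:
  assumes add: "\<And>k x y. P k (x + y) = P k x + P k y"
    and bound: "\<And>k x. hnorm H (P k x) \<le> C * hnorm H x" and C: "0 \<le> C"
    and dense: "nclosure (hnorm H) S = UNIV"
    and cauchy: "\<And>d. d \<in> S \<Longrightarrow> ncauchy (hnorm H) (\<lambda>k. P k d)"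
  shows "ncauchy (hnorm H) (\<lambda>k. P k x)"
  unfolding ncauchy_def
proof (intro allI impI)
  fix e :: real
  assume e: "e > 0"
  define \<delta> where "\<delta> = e / (3 * (C + 1))"
  have "\<delta> > 0"
    using e C by (simp add: \<delta>_def)
  obtain g where g: "\<forall>k. g k \<in> S" "ntends (hnorm H) g x"
    using dense unfolding nclosure_def by blast
  then obtain m where "hnorm H (g m - x) < \<delta>"
    using \<open>\<delta> > 0\<close> unfolding hn.ntends_iff by blast
  then obtain d where d: "d \<in> S" "hnorm H (x - d) < \<delta>"
    using g(1) hn.diff_commute by metis
  obtain M where M: "\<forall>i\<ge>M. \<forall>j\<ge>M. hnorm H (P i d - P j d) < e / 3"
    using cauchy[OF d(1)] e unfolding ncauchy_def by (meson divide_pos_pos zero_less_numeral)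
  have "hnorm H (P i x - P j x) < e" if "i \<ge> M" "j \<ge> M" for i j
  proof -
    have diff: "P k (y - z) = P k y - P k z" for k y z
      using add[of k "y - z" z] by (simp add: algebra_simps)
    have "P i x - P j x = (P i (x - d) + (P i d - P j d)) - P j (x - d)"
      by (simp add: diff)
    then have "hnorm H (P i x - P j x)
        \<le> hnorm H (P i (x - d) + (P i d - P j d)) + hnorm H (P j (x - d))"
      using hn.diff_le by simp
    moreover have "hnorm H (P i (x - d) + (P i d - P j d))
        \<le> hnorm H (P i (x - d)) + hnorm H (P i d - P j d)"
      by (rule hn.triangle)
    moreover have small: "hnorm H (P k (x - d)) \<le> e / 3" for k
    proof -
      have "hnorm H (P k (x - d)) \<le> C * \<delta>"
        using bound[of k "x - d"] mult_left_mono[OF less_imp_le[OF d(2)] C] by linarith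
      also have "\<dots> \<le> e / 3"
        using C e by (simp add: \<delta>_def field_simps)
      finally show ?thesis .
    qed
    moreover have "hnorm H (P i d - P j d) < e / 3"
      using M that by blast
    ultimately show ?thesis
      using small[of i] small[of j] by linarith
  qed
  then show "\<exists>M. \<forall>i\<ge>M. \<forall>j\<ge>M. hnorm H (P i x - P j x) < e"
    by blast
qed

end

lemma hnorm_diff_eq_if_hip_eq:
  assumes "hip K y y = hip H x x" "hip K y y' = hip H x x'"
    and "hip K y' y = hip H x' x" "hip K y' y' = hip H x' x'"
    and "chilbert H" "chilbert K"
  shows "hnorm K (y - y') = hnorm H (x - x')"
  using assms chilbert.hip_self_diff[OF assms(5)] chilbert.hip_self_diff[OF assms(6)]
  by (simp add: hnorm_def)

section \<open>Unitaries and the extension of densely defined isometries\<close>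

locale hilbert_unitary = H: chilbert H + K: chilbert K
  for H :: "('h::ab_group_add, 'b) hspace_scheme" and K :: "('k::ab_group_add, 'c) hspace_scheme" +
  fixes U :: "'h \<Rightarrow> 'k"
  assumes hip_U: "hip K (U x) (U y) = hip H x y"
    and surj_U: "surj U"
begin

lemma hnorm_U: "hnorm K (U x) = hnorm H x"
  by (simp add: hnorm_def hip_U)

lemma hnorm_U_diff: "hnorm K (U x - U y) = hnorm H (x - y)"
  by (rule hnorm_diff_eq_if_hip_eq) (simp_all add: hip_U H.chilbert_axioms K.chilbert_axioms)

lemma inj_U: "inj U"
proof (rule injI)
  fix x y
  assume "U x = U y"
  then have "hnorm H (x - y) = 0"
    using hnorm_U_diff[of x y] by simp
  then show "x = y"
    using H.hnorm_eq_0_iff by simp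
qed

lemma U_inv_U [simp]: "U (inv U y) = y"
  using surj_U by (simp add: surj_f_inv_f)

lemma inv_U_U [simp]: "inv U (U x) = x"
  using inj_U by simp

lemma U_eq_if_hip:
  assumes "\<And>z. hip K w (U z) = hip H x z"
  shows "U x = w"
proof -
  have "hip H (inv U w) z = hip H x z" for z
    using assms[of z] hip_U[of "inv U w" z] by simp
  then have "inv U w = x"
    by (rule H.hip_eq_imp_eq)
  then show ?thesis
    using U_inv_U[of w] by simp
qed

lemma U_add: "U (x + y) = U x + U y"
  by (rule U_eq_if_hip) (simp add: K.hip_add_left H.hip_add_left hip_U)

lemma U_scale: "U (hsm H c x) = hsm K c (U x)"
  by (rule U_eq_if_hip) (simp add: K.hip_scale_left H.hip_scale_left hip_U)

lemma unitary_map_U: "unitary_map H K U"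
  unfolding unitary_map_def bij_def using inj_U surj_U U_add U_scale hip_U by blast

lemma ntends_U: "ntends (hnorm H) f x \<Longrightarrow> ntends (hnorm K) (\<lambda>k. U (f k)) (U x)"
  by (simp add: ntends_def hnorm_U_diff)

lemma ntends_inv_U: "ntends (hnorm K) f y \<Longrightarrow> ntends (hnorm H) (\<lambda>k. inv U (f k)) (inv U y)"
  using hnorm_U_diff[of "inv U (f _)" "inv U y"] by (simp add: ntends_def)

end

definition joint_limit ::
    "('h::ab_group_add, 'b) hspace_scheme \<Rightarrow> ('k::ab_group_add, 'c) hspace_scheme
      \<Rightarrow> 's set \<Rightarrow> ('s \<Rightarrow> 'h) \<Rightarrow> ('s \<Rightarrow> 'k) \<Rightarrow> 'h \<Rightarrow> 'k \<Rightarrow> bool" where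
  "joint_limit H K S \<alpha> \<beta> x y \<longleftrightarrow> (\<exists>s. (\<forall>n. s n \<in> S)
     \<and> ntends (hnorm H) (\<lambda>n. \<alpha> (s n)) x \<and> ntends (hnorm K) (\<lambda>n. \<beta> (s n)) y)"

lemma joint_limit_swap: "joint_limit H K S \<alpha> \<beta> x y \<longleftrightarrow> joint_limit K H S \<beta> \<alpha> y x"
  unfolding joint_limit_def by blast

locale dense_isometry = H: chilbert H + K: chilbert K
  for H :: "('h::ab_group_add, 'b) hspace_scheme" and K :: "('k::ab_group_add, 'c) hspace_scheme" +
  fixes S :: "'s set" and \<alpha> :: "'s \<Rightarrow> 'h" and \<beta> :: "'s \<Rightarrow> 'k"
  assumes hip_eq: "s \<in> S \<Longrightarrow> t \<in> S \<Longrightarrow> hip K (\<beta> s) (\<beta> t) = hip H (\<alpha> s) (\<alpha> t)"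
    and dense_\<alpha>: "nclosure (hnorm H) (\<alpha> ` S) = UNIV"
    and dense_\<beta>: "nclosure (hnorm K) (\<beta> ` S) = UNIV"
begin

lemma hnorm_diff_eq: "s \<in> S \<Longrightarrow> t \<in> S \<Longrightarrow> hnorm K (\<beta> s - \<beta> t) = hnorm H (\<alpha> s - \<alpha> t)"
  by (rule hnorm_diff_eq_if_hip_eq) (simp_all add: hip_eq H.chilbert_axioms K.chilbert_axioms)

lemma swap: "dense_isometry K H S \<beta> \<alpha>"
  by unfold_locales (simp_all add: hip_eq dense_\<alpha> dense_\<beta>)

lemma joint_limit_exists: "\<exists>y. joint_limit H K S \<alpha> \<beta> x y"
proof -
  obtain s where s: "\<And>n. s n \<in> S" "ntends (hnorm H) (\<lambda>n. \<alpha> (s n)) x"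
    using dense_\<alpha> nclosure_image_seq by blast
  have "ncauchy (hnorm H) (\<lambda>n. \<alpha> (s n))"
    using H.hn.ntends_imp_ncauchy[OF s(2)] .
  then have "ncauchy (hnorm K) (\<lambda>n. \<beta> (s n))"
    unfolding ncauchy_def using hnorm_diff_eq s(1) by simp
  then obtain y where "ntends (hnorm K) (\<lambda>n. \<beta> (s n)) y"
    using K.complete by blast
  then show ?thesis
    unfolding joint_limit_def using s by blast
qed

lemma joint_limit_unique:
  assumes "joint_limit H K S \<alpha> \<beta> x y" "joint_limit H K S \<alpha> \<beta> x y'"
  shows "y = y'"
proof -
  obtain s where s: "\<forall>n. s n \<in> S" "ntends (hnorm H) (\<lambda>n. \<alpha> (s n)) x"
    "ntends (hnorm K) (\<lambda>n. \<beta> (s n)) y"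
    using assms(1) unfolding joint_limit_def by blast
  obtain t where t: "\<forall>n. t n \<in> S" "ntends (hnorm H) (\<lambda>n. \<alpha> (t n)) x"
    "ntends (hnorm K) (\<lambda>n. \<beta> (t n)) y'"
    using assms(2) unfolding joint_limit_def by blast
  have "(\<lambda>n. hnorm H (\<alpha> (t n) - \<alpha> (s n))) \<longlonglongrightarrow> 0"
    using H.hn.ntends_diff[OF t(2) s(2)] by (simp add: ntends_def)
  then have "(\<lambda>n. hnorm K (\<beta> (t n) - \<beta> (s n))) \<longlonglongrightarrow> 0"
    using hnorm_diff_eq s(1) t(1) by simp
  then have "ntends (hnorm K) (\<lambda>n. \<beta> (t n)) y"
    by (rule K.hn.ntends_transfer[OF s(3)])
  then show ?thesis
    using t(3) K.hn.ntends_unique by blast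
qed

lemma joint_limit_hip:
  assumes "joint_limit H K S \<alpha> \<beta> x y" "joint_limit H K S \<alpha> \<beta> x' y'"
  shows "hip K y y' = hip H x x'"
proof -
  obtain s where s: "\<forall>n. s n \<in> S" "ntends (hnorm H) (\<lambda>n. \<alpha> (s n)) x"
    "ntends (hnorm K) (\<lambda>n. \<beta> (s n)) y"
    using assms(1) unfolding joint_limit_def by blast
  obtain t where t: "\<forall>n. t n \<in> S" "ntends (hnorm H) (\<lambda>n. \<alpha> (t n)) x'"
    "ntends (hnorm K) (\<lambda>n. \<beta> (t n)) y'"
    using assms(2) unfolding joint_limit_def by blast
  have "(\<lambda>n. hip K (\<beta> (s n)) (\<beta> (t n))) \<longlonglongrightarrow> hip K y y'"
    by (rule K.hip_tendsto[OF s(3) t(3)])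
  moreover have "(\<lambda>n. hip K (\<beta> (s n)) (\<beta> (t n))) \<longlonglongrightarrow> hip H x x'"
    using H.hip_tendsto[OF s(2) t(2)] hip_eq s(1) t(1) by simp
  ultimately show ?thesis
    by (rule LIMSEQ_unique)
qed

theorem extends_to_unitary: "\<exists>U. hilbert_unitary H K U \<and> (\<forall>s\<in>S. U (\<alpha> s) = \<beta> s)"
proof -
  define U where "U x = (THE y. joint_limit H K S \<alpha> \<beta> x y)" for x
  have U: "joint_limit H K S \<alpha> \<beta> x (U x)" for x
    unfolding U_def using joint_limit_exists joint_limit_unique by (metis theI)
  have "joint_limit H K S \<alpha> \<beta> (\<alpha> s) (\<beta> s)" if "s \<in> S" for s
    unfolding joint_limit_def
    by (intro exI[of _ "\<lambda>n. s"]) (simp add: that H.hn.ntends_const K.hn.ntends_const)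
  then have "U (\<alpha> s) = \<beta> s" if "s \<in> S" for s
    using U joint_limit_unique that by blast
  moreover have "y \<in> range U" for y
  proof -
    obtain x where "joint_limit H K S \<alpha> \<beta> x y"
      using dense_isometry.joint_limit_exists[OF swap] joint_limit_swap by blast
    then show ?thesis
      using U joint_limit_unique by blast
  qed
  then have "surj U"
    by blast
  moreover have "hilbert_unitary H K U" if "surj U"
    using joint_limit_hip[OF U U] that by unfold_locales
  ultimately show ?thesis
    by blast
qed

end

section \<open>A doubling bound for real sequences\<close>

lemma le_if_powers_bounded:
  fixes a b c G :: real
  assumes b: "0 \<le> b" and c: "0 < c" and e: "\<And>n. n \<le> e n"
    and bound: "\<And>n. c * a ^ e n \<le> G * b ^ e n"
  shows "a \<le> b"
proof (rule ccontr)
  assume "\<not> a \<le> b"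
  then have ab: "b < a" and a: "0 < a"
    using b by auto
  show False
  proof (cases "b = 0")
    case True
    have "e 1 \<noteq> 0"
      using e[of 1] by simp
    then have "c * a ^ e 1 \<le> 0"
      using bound[of 1] True by (simp add: zero_power)
    moreover have "0 < c * a ^ e 1"
      using a c by simp
    ultimately show False
      by simp
  next
    case False
    define x where "x = a / b"
    have "1 < x"
      using ab b False by (simp add: x_def)
    then obtain n where n: "G / c < x ^ n"
      using real_arch_pow by blast
    have "c * (x ^ e n * b ^ e n) \<le> G * b ^ e n"
      using bound[of n] False by (simp add: x_def power_divide)
    then have "x ^ e n \<le> G / c"
      using c b False by (simp add: field_simps mult.assoc)
    moreover have "x ^ n \<le> x ^ e n"
      using \<open>1 < x\<close> e by (simp add: power_increasing)
    ultimately show False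
      using n by linarith
  qed
qed

lemma doubling_growth_bound:
  fixes t :: "nat \<Rightarrow> real"
  assumes t: "\<And>k. 0 \<le> t k" and r: "0 \<le> r"
    and doubling: "\<And>m. (t m)\<^sup>2 \<le> t (2 * m) * t 0"
    and growth: "\<And>k. (t k)\<^sup>2 \<le> G * r ^ (2 * k)"
  shows "t 1 \<le> r * t 0"
proof (cases "t 0 = 0")
  case True
  then show ?thesis
    using doubling[of 1] by simp
next
  case False
  then have t0: "0 < t 0"
    using t[of 0] by simp
  have iterate: "t 1 ^ 2 ^ n * t 0 \<le> t (2 ^ n) * t 0 ^ 2 ^ n" for n
  proof (induction n)
    case (Suc n)
    have "t 0 * (t 1 ^ 2 ^ Suc n * t 0) = (t 1 ^ 2 ^ n * t 0)\<^sup>2"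
      by (simp add: power_even_eq power_mult_distrib power2_eq_square mult_ac)
    also have "\<dots> \<le> (t (2 ^ n) * t 0 ^ 2 ^ n)\<^sup>2"
      using Suc.IH t t0 by (intro power_mono) auto
    also have "\<dots> \<le> t (2 ^ Suc n) * t 0 * (t 0 ^ 2 ^ n)\<^sup>2"
      using doubling[of "2 ^ n"] t0 by (simp add: power_mult_distrib)
    also have "\<dots> = t 0 * (t (2 ^ Suc n) * t 0 ^ 2 ^ Suc n)"
      by (simp add: power_even_eq mult_ac)
    finally show ?case
      using t0 by simp
  qed simp
  show ?thesis
  proof (rule le_if_powers_bounded)
    show "(t 0)\<^sup>2 * t 1 ^ (2 * 2 ^ n) \<le> G * (r * t 0) ^ (2 * 2 ^ n)" for n
    proof -
      have "(t 0)\<^sup>2 * t 1 ^ (2 * 2 ^ n) = (t 1 ^ 2 ^ n * t 0)\<^sup>2"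
        by (simp add: power_mult_distrib power_even_eq mult.commute)
      also have "\<dots> \<le> (t (2 ^ n) * t 0 ^ 2 ^ n)\<^sup>2"
        using iterate[of n] t t0 by (intro power_mono) auto
      also have "\<dots> \<le> G * r ^ (2 * 2 ^ n) * (t 0 ^ 2 ^ n)\<^sup>2"
        using mult_right_mono[OF growth[of "2 ^ n"], of "(t 0 ^ 2 ^ n)\<^sup>2"]
        by (simp add: power_mult_distrib)
      also have "\<dots> = G * (r * t 0) ^ (2 * 2 ^ n)"
        by (simp add: power_mult_distrib power_even_eq mult_ac)
      finally show ?thesis .
    qed
    show "n \<le> 2 * 2 ^ n" for n
      using less_exp[of n] by linarith
  qed (use r t0 in simp_all)
qed

section \<open>The CQ*-algebra and its bounded parts\<close>

locale cq_algebra =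
  fixes D :: "('a::ab_group_add, 'b) cq_data_scheme"
  assumes CQ: "CQ_setting D"
begin

abbreviation mul :: "'a \<Rightarrow> 'a \<Rightarrow> 'a" where "mul \<equiv> mulA D"
abbreviation adj :: "'a \<Rightarrow> 'a" where "adj \<equiv> invA D"

lemmas CQ_unfolded = CQ[unfolded CQ_setting_def cvec_space_def norm_on_def csubspace_def]

lemma scale_one: "smA D 1 x = x" using CQ_unfolded by simp
lemma scale_add_left: "smA D (a + b) x = smA D a x + smA D b x" using CQ_unfolded by simp
lemma nA_triangle: "nA D (x + y) \<le> nA D x + nA D y" using CQ_unfolded by simp
lemma nA_scale: "nA D (smA D c x) = cmod c * nA D x" using CQ_unfolded by simp
lemma nA_nonneg: "0 \<le> nA D x" using CQ_unfolded by simp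
lemma nA_eq_0_iff: "nA D x = 0 \<longleftrightarrow> x = 0" using CQ_unfolded by simp
lemma nA_complete: "ncauchy (nA D) f \<Longrightarrow> \<exists>x. ntends (nA D) f x" using CQ_unfolded by simp
lemma nA_adj: "nA D (adj x) = nA D x" using CQ_unfolded by simp
lemma nA_mul_le: "a \<in> A0 D \<Longrightarrow> b \<in> A0 D \<Longrightarrow> nA D (mul a b) \<le> nA D a * n0A D b"
  using CQ_unfolded by simp

lemma A0_add: "a \<in> A0 D \<Longrightarrow> b \<in> A0 D \<Longrightarrow> a + b \<in> A0 D" using CQ_unfolded by simp
lemma A0_scale: "a \<in> A0 D \<Longrightarrow> smA D c a \<in> A0 D" using CQ_unfolded by simp
lemma A0_mul: "a \<in> A0 D \<Longrightarrow> b \<in> A0 D \<Longrightarrow> mul a b \<in> A0 D" using CQ_unfolded by simp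
lemma A0_adj: "a \<in> A0 D \<Longrightarrow> adj a \<in> A0 D" using CQ_unfolded by simp

lemma mul_assoc: "a \<in> A0 D \<Longrightarrow> b \<in> A0 D \<Longrightarrow> c \<in> A0 D \<Longrightarrow> mul (mul a b) c = mul a (mul b c)"
  using CQ_unfolded by simp
lemma mul_add_right: "a \<in> A0 D \<Longrightarrow> b \<in> A0 D \<Longrightarrow> c \<in> A0 D \<Longrightarrow> mul a (b + c) = mul a b + mul a c"
  using CQ_unfolded by simp
lemma mul_add_left: "a \<in> A0 D \<Longrightarrow> b \<in> A0 D \<Longrightarrow> c \<in> A0 D \<Longrightarrow> mul (a + b) c = mul a c + mul b c"
  using CQ_unfolded by simp

lemma adj_add: "adj (x + y) = adj x + adj y" using CQ_unfolded by simp
lemma adj_adj: "adj (adj x) = x" using CQ_unfolded by simp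
lemma adj_mul: "a \<in> A0 D \<Longrightarrow> b \<in> A0 D \<Longrightarrow> adj (mul a b) = mul (adj b) (adj a)"
  using CQ_unfolded by simp

lemma n0A_triangle: "a \<in> A0 D \<Longrightarrow> b \<in> A0 D \<Longrightarrow> n0A D (a + b) \<le> n0A D a + n0A D b"
  using CQ_unfolded by simp
lemma n0A_scale: "a \<in> A0 D \<Longrightarrow> n0A D (smA D c a) = cmod c * n0A D a" using CQ_unfolded by simp
lemma n0A_nonneg: "a \<in> A0 D \<Longrightarrow> 0 \<le> n0A D a" using CQ_unfolded by simp
lemma n0A_mul: "a \<in> A0 D \<Longrightarrow> b \<in> A0 D \<Longrightarrow> n0A D (mul a b) \<le> n0A D a * n0A D b"
  using CQ_unfolded by simp
lemma n0A_Cstar: "a \<in> A0 D \<Longrightarrow> n0A D (mul (adj a) a) = (n0A D a)\<^sup>2" using CQ_unfolded by simp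

lemma scale_zero: "smA D 0 x = 0"
  using scale_add_left[of 0 0 x] by simp

lemma scale_minus_one: "smA D (- 1) x = - x"
proof -
  have "x + smA D (- 1) x = 0"
    using scale_add_left[of 1 "- 1" x] by (simp add: scale_one scale_zero)
  then show ?thesis
    using neg_eq_iff_add_eq_0[of x "smA D (- 1) x"] by simp
qed

lemma nA_minus: "nA D (- x) = nA D x"
  using nA_scale[of "- 1" x] by (simp add: scale_minus_one)

sublocale nA: group_norm "nA D"
  by unfold_locales (simp_all add: nA_triangle nA_nonneg nA_eq_0_iff nA_minus)

lemma A0_minus: "a \<in> A0 D \<Longrightarrow> - a \<in> A0 D"
  using A0_scale[of a "- 1"] by (simp add: scale_minus_one)

lemma A0_diff: "a \<in> A0 D \<Longrightarrow> b \<in> A0 D \<Longrightarrow> a - b \<in> A0 D"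
  using A0_add[OF _ A0_minus, of a b] by simp

lemma mul_diff_right: "a \<in> A0 D \<Longrightarrow> b \<in> A0 D \<Longrightarrow> c \<in> A0 D \<Longrightarrow> mul a (b - c) = mul a b - mul a c"
  using mul_add_right[of a "b - c" c] A0_diff by (simp add: eq_diff_eq)

lemma mul_diff_left: "a \<in> A0 D \<Longrightarrow> b \<in> A0 D \<Longrightarrow> c \<in> A0 D \<Longrightarrow> mul (a - b) c = mul a c - mul b c"
  using mul_add_left[of "a - b" b c] A0_diff by (simp add: eq_diff_eq)

lemma adj_diff: "adj (x - y) = adj x - adj y"
  using adj_add[of "x - y" y] by (simp add: eq_diff_eq)

lemma n0A_adj: "a \<in> A0 D \<Longrightarrow> n0A D (adj a) = n0A D a"
proof -
  have le: "n0A D b \<le> n0A D (adj b)" if b: "b \<in> A0 D" for b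
  proof (cases "n0A D b = 0")
    case False
    then have "0 < n0A D b"
      using n0A_nonneg[OF b] by simp
    moreover have "(n0A D b)\<^sup>2 \<le> n0A D (adj b) * n0A D b"
      using n0A_Cstar[OF b] n0A_mul[OF A0_adj[OF b] b] by simp
    ultimately show ?thesis
      by (simp add: power2_eq_square)
  qed (use n0A_nonneg[OF A0_adj[OF b]] in simp)
  assume "a \<in> A0 D"
  then show ?thesis
    using le[of a] le[of "adj a"] A0_adj[of a] adj_adj[of a] by simp
qed

lemma nA_mul_le_left:
  assumes "a \<in> A0 D" "b \<in> A0 D"
  shows "nA D (mul a b) \<le> n0A D a * nA D b"
proof -
  have "nA D (mul a b) = nA D (mul (adj b) (adj a))"
    using nA_adj[of "mul a b"] adj_mul[OF assms] by simp
  also have "\<dots> \<le> nA D (adj b) * n0A D (adj a)"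
    using nA_mul_le A0_adj assms by blast
  also have "\<dots> = n0A D a * nA D b"
    using nA_adj n0A_adj assms by simp
  finally show ?thesis .
qed

lemma n0A_diff_le: "a \<in> A0 D \<Longrightarrow> b \<in> A0 D \<Longrightarrow> n0A D (a - b) \<le> n0A D a + n0A D b"
  using n0A_triangle[OF _ A0_minus, of a b] n0A_scale[of b "- 1"] by (simp add: scale_minus_one)

lemma nA_mul_diff_le:
  assumes "a \<in> A0N D N" "b' \<in> A0N D M" "b \<in> A0 D" "a' \<in> A0 D"
  shows "nA D (mul a b - mul a' b') \<le> real N * nA D (b - b') + real M * nA D (a - a')"
proof -
  have A0: "a \<in> A0 D" "b' \<in> A0 D" and n0A: "n0A D a \<le> real N" "n0A D b' \<le> real M"
    using assms(1,2) by (simp_all add: A0N_def)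
  have "mul a b - mul a' b' = mul a (b - b') + mul (a - a') b'"
    using mul_diff_right[of a b b'] mul_diff_left[of a a' b'] A0 assms(3,4) by simp
  then have "nA D (mul a b - mul a' b') \<le> nA D (mul a (b - b')) + nA D (mul (a - a') b')"
    using nA_triangle by simp
  also have "\<dots> \<le> n0A D a * nA D (b - b') + nA D (a - a') * n0A D b'"
    using nA_mul_le_left[of a "b - b'"] nA_mul_le[of "a - a'" b'] A0 assms(3,4) A0_diff
    by (meson add_mono)
  also have "\<dots> \<le> real N * nA D (b - b') + real M * nA D (a - a')"
    using n0A nA_nonneg by (simp add: add_mono mult_right_mono mult.commute[of "nA D _"])
  finally show ?thesis .
qed

(* Convergence in the inductive limit topology of A1. *)
definition bounded_approx :: "nat \<Rightarrow> (nat \<Rightarrow> 'a) \<Rightarrow> 'a \<Rightarrow> bool" where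
  "bounded_approx N f X \<longleftrightarrow> (\<forall>k. f k \<in> A0N D N) \<and> ntends (nA D) f X"

lemma A1_iff: "X \<in> A1 D \<longleftrightarrow> (\<exists>N f. bounded_approx N f X)"
  by (auto simp: A1_def nclosure_def bounded_approx_def)

lemma bounded_approx_A1: "bounded_approx N f X \<Longrightarrow> X \<in> A1 D"
  using A1_iff by blast

lemma bounded_approxD:
  assumes "bounded_approx N f X"
  shows "f k \<in> A0 D" "n0A D (f k) \<le> real N" "f k \<in> A0N D N" "ntends (nA D) f X"
  using assms by (simp_all add: bounded_approx_def A0N_def)

lemma bounded_approx_mono:
  assumes "N \<le> M" "bounded_approx N f X"
  shows "bounded_approx M f X"
  using assms order_trans[OF bounded_approxD(2)[OF assms(2)], of "real M"]
  by (simp add: bounded_approx_def A0N_def)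

lemma A0_in_A0N: "a \<in> A0 D \<Longrightarrow> a \<in> A0N D (nat \<lceil>n0A D a\<rceil>)"
  by (simp add: A0N_def) linarith

lemma bounded_approx_const: "a \<in> A0N D N \<Longrightarrow> bounded_approx N (\<lambda>k. a) a"
  by (simp add: bounded_approx_def nA.ntends_const)

lemma bounded_approx_adj: "bounded_approx N g Y \<Longrightarrow> bounded_approx N (\<lambda>k. adj (g k)) (adj Y)"
  by (simp add: bounded_approx_def A0N_def ntends_def A0_adj n0A_adj nA_adj flip: adj_diff)

lemma mul_A0N: "a \<in> A0N D N \<Longrightarrow> b \<in> A0N D M \<Longrightarrow> mul a b \<in> A0N D (N * M)"
  using n0A_mul[of a b] mult_mono[of "n0A D a" N "n0A D b" M] n0A_nonneg[of a] n0A_nonneg[of b]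
  by (auto simp: A0N_def A0_mul)

lemma mul_approx_diff_tendsto_0:
  assumes "bounded_approx N f X" "bounded_approx N g Y"
    and "bounded_approx M f' X" "bounded_approx M g' Y"
  shows "(\<lambda>k. nA D (mul (f' k) (g' k) - mul (f k) (g k))) \<longlonglongrightarrow> 0"
proof (rule LIMSEQ_zero_if_norm_le)
  show "norm (nA D (mul (f' k) (g' k) - mul (f k) (g k)))
      \<le> real M * nA D (g' k - g k) + real N * nA D (f' k - f k)" for k
    using nA_mul_diff_le[of "f' k" M "g k" N "g' k" "f k"] bounded_approxD[OF assms(1)]
      bounded_approxD[OF assms(2)] bounded_approxD[OF assms(3)] bounded_approxD[OF assms(4)] nA_nonneg
    by simp
  have "(\<lambda>k. nA D (g' k - g k)) \<longlonglongrightarrow> 0" "(\<lambda>k. nA D (f' k - f k)) \<longlonglongrightarrow> 0"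
    using nA.ntends_diff[of g' Y g Y] nA.ntends_diff[of f' X f X] bounded_approxD(4)[OF assms(1)]
      bounded_approxD(4)[OF assms(2)] bounded_approxD(4)[OF assms(3)] bounded_approxD(4)[OF assms(4)]
    by (simp_all add: ntends_def)
  then show "(\<lambda>k. real M * nA D (g' k - g k) + real N * nA D (f' k - f k)) \<longlonglongrightarrow> 0"
    by (intro tendsto_add_zero tendsto_mult_right_zero)
qed

lemma ntends_prod1:
  assumes f: "bounded_approx N f X" and g: "bounded_approx N g Y"
  shows "ntends (nA D) (\<lambda>k. mul (f k) (g k)) (prod1 D X Y)"
proof -
  have "ncauchy (nA D) (\<lambda>k. mul (f k) (g k))"
  proof (rule ncauchy_dominated)
    show "ncauchy (nA D) f"
      by (rule nA.ntends_imp_ncauchy[OF bounded_approxD(4)[OF f]])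
    show "ncauchy (nA D) g"
      by (rule nA.ntends_imp_ncauchy[OF bounded_approxD(4)[OF g]])
    show "nA D (mul (f i) (g i) - mul (f j) (g j)) \<le> real N * (nA D (f i - f j) + nA D (g i - g j))"
      for i j
      using nA_mul_diff_le[of "f i" N "g j" N "g i" "f j"] bounded_approxD[OF f] bounded_approxD[OF g]
      by (simp add: algebra_simps)
  qed simp
  then obtain Z where Z: "ntends (nA D) (\<lambda>k. mul (f k) (g k)) Z"
    using nA_complete by blast
  have "prod1 D X Y = Z"
    unfolding prod1_def
  proof (rule the_equality)
    show "\<exists>N f g. (\<forall>k. f k \<in> A0N D N \<and> g k \<in> A0N D N) \<and> ntends (nA D) f X
        \<and> ntends (nA D) g Y \<and> ntends (nA D) (\<lambda>k. mul (f k) (g k)) Z"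
      using f g Z unfolding bounded_approx_def by blast
  next
    fix Z'
    assume "\<exists>N f g. (\<forall>k. f k \<in> A0N D N \<and> g k \<in> A0N D N) \<and> ntends (nA D) f X
        \<and> ntends (nA D) g Y \<and> ntends (nA D) (\<lambda>k. mul (f k) (g k)) Z'"
    then obtain M f' g' where f': "bounded_approx M f' X" and g': "bounded_approx M g' Y"
      and Z': "ntends (nA D) (\<lambda>k. mul (f' k) (g' k)) Z'"
      unfolding bounded_approx_def by blast
    have "ntends (nA D) (\<lambda>k. mul (f' k) (g' k)) Z"
      using Z mul_approx_diff_tendsto_0[OF f g f' g'] by (rule nA.ntends_transfer)
    then show "Z' = Z"
      using Z' nA.ntends_unique by blast
  qed
  with Z show ?thesis
    by simp
qed

lemma bounded_approx_prod1:
  assumes "bounded_approx N f X" "bounded_approx N g Y"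
  shows "bounded_approx (N * N) (\<lambda>k. mul (f k) (g k)) (prod1 D X Y)"
  using ntends_prod1[OF assms] mul_A0N bounded_approxD(3)[OF assms(1)] bounded_approxD(3)[OF assms(2)]
  by (simp add: bounded_approx_def)

end

locale cq_functional = cq_algebra D for D :: "('a::ab_group_add, 'b) cq_data_scheme" +
  fixes \<omega> :: "'a \<Rightarrow> complex"
  assumes positive: "pos_functional D \<omega>"
begin

lemma omega_add: "a \<in> A0 D \<Longrightarrow> b \<in> A0 D \<Longrightarrow> \<omega> (a + b) = \<omega> a + \<omega> b"
  using positive by (simp add: pos_functional_def)

lemma omega_diff: "a \<in> A0 D \<Longrightarrow> b \<in> A0 D \<Longrightarrow> \<omega> (a - b) = \<omega> a - \<omega> b"
  using omega_add[of "a - b" b] A0_diff by (simp add: eq_diff_eq)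

lemma omega_bound:
  obtains \<gamma> where "0 \<le> \<gamma>" "\<And>a. a \<in> A0 D \<Longrightarrow> cmod (\<omega> a) \<le> \<gamma> * nA D a"
proof -
  obtain \<gamma> where \<gamma>: "\<forall>a\<in>A0 D. cmod (\<omega> a) \<le> \<gamma> * nA D a"
    using positive by (auto simp: pos_functional_def)
  have "cmod (\<omega> a) \<le> max \<gamma> 0 * nA D a" if "a \<in> A0 D" for a
  proof -
    have "\<gamma> * nA D a \<le> max \<gamma> 0 * nA D a"
      by (rule mult_right_mono) (simp_all add: nA_nonneg)
    then show ?thesis
      by (rule order_trans[OF \<gamma>[rule_format, OF that]])
  qed
  then show ?thesis
    using that[of "max \<gamma> 0"] by simp
qed

lemma omegabar_tendsto:
  assumes f: "\<And>k. f k \<in> A0 D" "ntends (nA D) f X"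
  shows "(\<lambda>k. \<omega> (f k)) \<longlonglongrightarrow> omegabar D \<omega> X"
proof -
  obtain \<gamma> where \<gamma>: "0 \<le> \<gamma>" "\<And>a. a \<in> A0 D \<Longrightarrow> cmod (\<omega> a) \<le> \<gamma> * nA D a"
    using omega_bound by blast
  have lipschitz: "cmod (\<omega> a - \<omega> b) \<le> \<gamma> * nA D (a - b)" if "a \<in> A0 D" "b \<in> A0 D" for a b
    using \<gamma>(2)[of "a - b"] omega_diff[OF that] A0_diff[OF that] by simp
  have "ncauchy cmod (\<lambda>k. \<omega> (f k))"
  proof (rule ncauchy_dominated)
    show "ncauchy (nA D) f"
      using nA.ntends_imp_ncauchy[OF f(2)] .
    then show "ncauchy (nA D) f" .
    have "\<gamma> * nA D (f i - f j) \<le> \<gamma> * (nA D (f i - f j) + nA D (f i - f j))" for i j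
      by (intro mult_left_mono) (simp_all add: nA_nonneg \<gamma>(1))
    then show "cmod (\<omega> (f i) - \<omega> (f j)) \<le> \<gamma> * (nA D (f i - f j) + nA D (f i - f j))" for i j
      by (rule order_trans[OF lipschitz[OF f(1) f(1)]])
  qed (rule \<gamma>(1))
  then have "Cauchy (\<lambda>k. \<omega> (f k))"
    by (simp add: ncauchy_def Cauchy_def dist_norm)
  then obtain c where c: "(\<lambda>k. \<omega> (f k)) \<longlonglongrightarrow> c"
    by (auto simp: Cauchy_convergent_iff convergent_def)
  have "omegabar D \<omega> X = c"
    unfolding omegabar_def
  proof (rule the_equality)
    show "\<exists>f. (\<forall>k. f k \<in> A0 D) \<and> ntends (nA D) f X \<and> (\<lambda>k. \<omega> (f k)) \<longlonglongrightarrow> c"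
      using f c by blast
  next
    fix c'
    assume "\<exists>f'. (\<forall>k. f' k \<in> A0 D) \<and> ntends (nA D) f' X \<and> (\<lambda>k. \<omega> (f' k)) \<longlonglongrightarrow> c'"
    then obtain f' where f': "\<forall>k. f' k \<in> A0 D" "ntends (nA D) f' X" "(\<lambda>k. \<omega> (f' k)) \<longlonglongrightarrow> c'"
      by blast
    have "(\<lambda>k. \<gamma> * nA D (f k - f' k)) \<longlonglongrightarrow> 0"
      using nA.ntends_diff[OF f(2) f'(2)] by (simp add: ntends_def tendsto_mult_right_zero)
    then have "(\<lambda>k. \<omega> (f k) - \<omega> (f' k)) \<longlonglongrightarrow> 0"
      by (rule LIMSEQ_zero_if_norm_le[rotated]) (simp add: lipschitz f(1) f'(1))
    moreover have "(\<lambda>k. \<omega> (f k) - \<omega> (f' k)) \<longlonglongrightarrow> c - c'"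
      using c f'(3) by (rule tendsto_diff)
    ultimately have "0 = c - c'"
      by (rule LIMSEQ_unique)
    then show "c' = c"
      by simp
  qed
  with c show ?thesis
    by simp
qed

end

section \<open>The GNS representation of the functional\<close>

locale cq_gns0 = cq_functional D \<omega>
  for D :: "('a::ab_group_add, 'b) cq_data_scheme" and \<omega> :: "'a \<Rightarrow> complex" +
  fixes H :: "('h::ab_group_add, 'c) hspace_scheme"
    and lamw :: "'a \<Rightarrow> 'h" and piw :: "'a \<Rightarrow> 'h \<Rightarrow> 'h"
  assumes GNS0: "is_GNS0 D \<omega> H lamw piw"
begin

sublocale H: chilbert H
  using GNS0 by (simp add: is_GNS0_def chilbert_def)

lemma lamw_add: "a \<in> A0 D \<Longrightarrow> b \<in> A0 D \<Longrightarrow> lamw (a + b) = lamw a + lamw b"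
  using GNS0 by (simp add: is_GNS0_def)

lemma lamw_dense: "nclosure (hnorm H) (lamw ` A0 D) = UNIV"
  using GNS0 by (simp add: is_GNS0_def)

lemma hip_lamw: "a \<in> A0 D \<Longrightarrow> b \<in> A0 D \<Longrightarrow> hip H (lamw a) (lamw b) = \<omega> (mul (adj b) a)"
  using GNS0 by (simp add: is_GNS0_def)

lemma bounded_op_piw: "a \<in> A0 D \<Longrightarrow> bounded_op H (piw a)"
  using GNS0 by (simp add: is_GNS0_def)

lemma piw_lamw: "a \<in> A0 D \<Longrightarrow> b \<in> A0 D \<Longrightarrow> piw a (lamw b) = lamw (mul a b)"
  using GNS0 by (simp add: is_GNS0_def)

lemma lamw_diff: "a \<in> A0 D \<Longrightarrow> b \<in> A0 D \<Longrightarrow> lamw (a - b) = lamw a - lamw b"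
  using lamw_add[of "a - b" b] A0_diff by (simp add: eq_diff_eq)

lemma hnorm_lamw_square_le:
  obtains G where "0 \<le> G" "\<And>c. c \<in> A0 D \<Longrightarrow> (hnorm H (lamw c))\<^sup>2 \<le> G * nA D c * n0A D c"
proof -
  obtain \<gamma> where \<gamma>: "0 \<le> \<gamma>" "\<And>a. a \<in> A0 D \<Longrightarrow> cmod (\<omega> a) \<le> \<gamma> * nA D a"
    using omega_bound by blast
  have "(hnorm H (lamw c))\<^sup>2 \<le> \<gamma> * nA D c * n0A D c" if c: "c \<in> A0 D" for c
  proof -
    have "(hnorm H (lamw c))\<^sup>2 = Re (\<omega> (mul (adj c) c))"
      using H.hnorm_square hip_lamw[OF c c] by simp
    also have "\<dots> \<le> cmod (\<omega> (mul (adj c) c))"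
      by (rule complex_Re_le_cmod)
    also have "\<dots> \<le> \<gamma> * nA D (mul (adj c) c)"
      using \<gamma>(2) A0_mul A0_adj c by blast
    also have "\<dots> \<le> \<gamma> * (nA D c * n0A D c)"
      using nA_mul_le[OF A0_adj[OF c] c] nA_adj[of c] \<gamma>(1) by (simp add: mult_left_mono)
    finally show ?thesis
      by (simp add: mult.assoc)
  qed
  with \<gamma>(1) show ?thesis
    using that by blast
qed

lemma ncauchy_lamw:
  assumes f: "\<And>k. f k \<in> A0N D N" and cauchy: "ncauchy (nA D) f"
  shows "ncauchy (hnorm H) (\<lambda>k. lamw (f k))"
  unfolding ncauchy_def
proof (intro allI impI)
  fix e :: real
  assume e: "e > 0"
  obtain G where G: "0 \<le> G" "\<And>c. c \<in> A0 D \<Longrightarrow> (hnorm H (lamw c))\<^sup>2 \<le> G * nA D c * n0A D c"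
    using hnorm_lamw_square_le by blast
  define C where "C = G * (2 * real N)"
  have C: "0 \<le> C"
    using G(1) by (simp add: C_def)
  have "e\<^sup>2 / (C + 1) > 0"
    using e C by simp
  then obtain M where M: "\<forall>i\<ge>M. \<forall>j\<ge>M. nA D (f i - f j) < e\<^sup>2 / (C + 1)"
    using cauchy unfolding ncauchy_def by blast
  have "hnorm H (lamw (f i) - lamw (f j)) < e" if "i \<ge> M" "j \<ge> M" for i j
  proof -
    have A0: "f i \<in> A0 D" "f j \<in> A0 D" and n0A: "n0A D (f i) \<le> N" "n0A D (f j) \<le> N"
      using f by (simp_all add: A0N_def)
    have close: "nA D (f i - f j) < e\<^sup>2 / (C + 1)"
      using M that by blast
    have "n0A D (f i - f j) \<le> 2 * real N"
      using n0A_diff_le[OF A0] n0A by linarith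
    then have "G * nA D (f i - f j) * n0A D (f i - f j) \<le> G * nA D (f i - f j) * (2 * real N)"
      by (rule mult_left_mono) (simp add: G(1) nA_nonneg)
    then have "G * nA D (f i - f j) * n0A D (f i - f j) \<le> C * nA D (f i - f j)"
      by (simp add: C_def mult_ac)
    moreover have "(hnorm H (lamw (f i) - lamw (f j)))\<^sup>2 \<le> G * nA D (f i - f j) * n0A D (f i - f j)"
      using G(2)[OF A0_diff[OF A0]] lamw_diff[OF A0] by simp
    moreover have "C * nA D (f i - f j) \<le> C * (e\<^sup>2 / (C + 1))"
      by (rule mult_left_mono[OF less_imp_le[OF close] C])
    moreover have "C * (e\<^sup>2 / (C + 1)) < e\<^sup>2"
      using C e by (simp add: field_simps)
    ultimately have "(hnorm H (lamw (f i) - lamw (f j)))\<^sup>2 < e\<^sup>2"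
      by linarith
    then show ?thesis
      by (rule power_less_imp_less_base) (use e in simp)
  qed
  then show "\<exists>M. \<forall>i\<ge>M. \<forall>j\<ge>M. hnorm H (lamw (f i) - lamw (f j)) < e"
    by blast
qed

lemma lamw_convergent:
  assumes "bounded_approx N f X"
  obtains v where "ntends (hnorm H) (\<lambda>k. lamw (f k)) v"
  using ncauchy_lamw[OF bounded_approxD(3)[OF assms] nA.ntends_imp_ncauchy[OF bounded_approxD(4)[OF assms]]]
    H.complete that by blast

lemma A0_funpow_mul: "h \<in> A0 D \<Longrightarrow> b \<in> A0 D \<Longrightarrow> (mul h ^^ k) b \<in> A0 D"
  by (induction k) (simp_all add: A0_mul)

lemma hip_lamw_funpow_selfadjoint:
  assumes h: "h \<in> A0 D" "adj h = h" and b: "b \<in> A0 D"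
  shows "hip H (lamw ((mul h ^^ p) b)) (lamw ((mul h ^^ q) b))
    = hip H (lamw ((mul h ^^ (p + q)) b)) (lamw b)"
proof (induction q arbitrary: p)
  case (Suc q)
  define c where "c k = (mul h ^^ k) b" for k
  have c: "c k \<in> A0 D" for k
    unfolding c_def by (rule A0_funpow_mul[OF h(1) b])
  have "hip H (lamw (c p)) (lamw (mul h (c q))) = \<omega> (mul (adj (mul h (c q))) (c p))"
    using hip_lamw A0_mul c h(1) by simp
  also have "mul (adj (mul h (c q))) (c p) = mul (adj (c q)) (mul h (c p))"
    using adj_mul[OF h(1) c] mul_assoc[OF A0_adj[OF c] h(1) c] h(2) by simp
  also have "\<omega> (mul (adj (c q)) (mul h (c p))) = hip H (lamw (mul h (c p))) (lamw (c q))"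
    using hip_lamw A0_mul c h(1) by simp
  finally show ?case
    using Suc.IH[of "Suc p"] by (simp add: c_def)
qed simp

lemma nA_funpow_mul_le:
  assumes "h \<in> A0 D" "b \<in> A0 D"
  shows "nA D ((mul h ^^ k) b) \<le> n0A D h ^ k * nA D b"
proof (induction k)
  case (Suc k)
  have "nA D ((mul h ^^ Suc k) b) \<le> n0A D h * nA D ((mul h ^^ k) b)"
    using nA_mul_le_left[OF assms(1) A0_funpow_mul[OF assms]] by simp
  also have "\<dots> \<le> n0A D h * (n0A D h ^ k * nA D b)"
    using Suc.IH n0A_nonneg[OF assms(1)] by (rule mult_left_mono)
  finally show ?case
    by (simp add: mult.assoc)
qed simp

lemma n0A_funpow_mul_le:
  assumes "h \<in> A0 D" "b \<in> A0 D"
  shows "n0A D ((mul h ^^ k) b) \<le> n0A D h ^ k * n0A D b"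
proof (induction k)
  case (Suc k)
  have "n0A D ((mul h ^^ Suc k) b) \<le> n0A D h * n0A D ((mul h ^^ k) b)"
    using n0A_mul[OF assms(1) A0_funpow_mul[OF assms]] by simp
  also have "\<dots> \<le> n0A D h * (n0A D h ^ k * n0A D b)"
    using Suc.IH n0A_nonneg[OF assms(1)] by (rule mult_left_mono)
  finally show ?case
    by (simp add: mult.assoc)
qed simp

lemma hnorm_lamw_selfadjoint_mul_le:
  assumes h: "h \<in> A0 D" "adj h = h" and b: "b \<in> A0 D"
  shows "hnorm H (lamw (mul h b)) \<le> n0A D h * hnorm H (lamw b)"
proof -
  define t where "t k = hnorm H (lamw ((mul h ^^ k) b))" for k
  obtain G where G: "0 \<le> G" "\<And>c. c \<in> A0 D \<Longrightarrow> (hnorm H (lamw c))\<^sup>2 \<le> G * nA D c * n0A D c"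
    using hnorm_lamw_square_le by blast
  have "t 1 \<le> n0A D h * t 0"
  proof (rule doubling_growth_bound)
    show "0 \<le> t k" for k
      by (simp add: t_def H.hnorm_nonneg)
    show "0 \<le> n0A D h"
      by (rule n0A_nonneg[OF h(1)])
    show "(t m)\<^sup>2 \<le> t (2 * m) * t 0" for m
    proof -
      have "(t m)\<^sup>2 = Re (hip H (lamw ((mul h ^^ (m + m)) b)) (lamw b))"
        using H.hnorm_square hip_lamw_funpow_selfadjoint[OF h b, of m m] by (simp add: t_def)
      also have "\<dots> \<le> cmod (hip H (lamw ((mul h ^^ (m + m)) b)) (lamw b))"
        by (rule complex_Re_le_cmod)
      also have "\<dots> \<le> t (m + m) * t 0"
        unfolding t_def using H.Cauchy_Schwarz by simp
      finally show ?thesis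
        by (simp add: mult_2)
    qed
    show "(t k)\<^sup>2 \<le> (G * nA D b * n0A D b) * n0A D h ^ (2 * k)" for k
    proof -
      have "(t k)\<^sup>2 \<le> G * nA D ((mul h ^^ k) b) * n0A D ((mul h ^^ k) b)"
        unfolding t_def by (rule G(2)[OF A0_funpow_mul[OF h(1) b]])
      also have "\<dots> \<le> G * (n0A D h ^ k * nA D b) * (n0A D h ^ k * n0A D b)"
        using nA_funpow_mul_le[OF h(1) b, of k] n0A_funpow_mul_le[OF h(1) b, of k] G(1)
          nA_nonneg n0A_nonneg[OF A0_funpow_mul[OF h(1) b]] n0A_nonneg[OF h(1)]
        by (intro mult_mono mult_left_mono) auto
      also have "\<dots> = (G * nA D b * n0A D b) * n0A D h ^ (2 * k)"
        by (simp add: power_mult power2_eq_square mult_ac)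
      finally show ?thesis .
    qed
  qed
  then show ?thesis
    by (simp add: t_def)
qed

lemma hnorm_lamw_mul_le:
  assumes a: "a \<in> A0 D" and b: "b \<in> A0 D"
  shows "hnorm H (lamw (mul a b)) \<le> n0A D a * hnorm H (lamw b)"
proof -
  define h where "h = mul (adj a) a"
  have h: "h \<in> A0 D" "adj h = h"
    using a by (simp_all add: h_def A0_mul A0_adj adj_mul adj_adj)
  have "mul (adj (mul a b)) (mul a b) = mul (adj b) (mul h b)"
    using a b by (simp add: h_def adj_mul mul_assoc A0_adj A0_mul)
  then have "(hnorm H (lamw (mul a b)))\<^sup>2 = Re (hip H (lamw (mul h b)) (lamw b))"
    using H.hnorm_square hip_lamw a b h A0_mul by simp
  also have "\<dots> \<le> cmod (hip H (lamw (mul h b)) (lamw b))"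
    by (rule complex_Re_le_cmod)
  also have "\<dots> \<le> hnorm H (lamw (mul h b)) * hnorm H (lamw b)"
    by (rule H.Cauchy_Schwarz)
  also have "\<dots> \<le> n0A D h * hnorm H (lamw b) * hnorm H (lamw b)"
    using hnorm_lamw_selfadjoint_mul_le[OF h b] H.hnorm_nonneg by (rule mult_right_mono)
  also have "n0A D h = (n0A D a)\<^sup>2"
    using n0A_Cstar a by (simp add: h_def)
  finally have "(hnorm H (lamw (mul a b)))\<^sup>2 \<le> (n0A D a * hnorm H (lamw b))\<^sup>2"
    by (simp add: power2_eq_square mult_ac)
  then show ?thesis
    by (rule power2_le_imp_le) (simp add: n0A_nonneg[OF a] H.hnorm_nonneg)
qed

lemma hnorm_piw_le:
  assumes a: "a \<in> A0 D"
  shows "hnorm H (piw a x) \<le> n0A D a * hnorm H x"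
proof -
  obtain s where s: "\<And>k. s k \<in> A0 D" "ntends (hnorm H) (\<lambda>k. lamw (s k)) x"
    using lamw_dense nclosure_image_seq by blast
  have "(\<lambda>k. hnorm H (piw a (lamw (s k)))) \<longlonglongrightarrow> hnorm H (piw a x)"
    by (rule H.hn.ntends_norm[OF H.bounded_op_ntends[OF bounded_op_piw[OF a] s(2)]])
  moreover have "(\<lambda>k. n0A D a * hnorm H (lamw (s k))) \<longlonglongrightarrow> n0A D a * hnorm H x"
    by (intro tendsto_mult tendsto_const H.hn.ntends_norm[OF s(2)])
  ultimately show ?thesis
    by (rule LIMSEQ_le) (use hnorm_lamw_mul_le a s(1) piw_lamw in simp)
qed

lemma hnorm_piw_approx_le:
  assumes "bounded_approx N f X"
  shows "hnorm H (piw (f k) x) \<le> real N * hnorm H x"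
  using hnorm_piw_le[OF bounded_approxD(1)[OF assms]]
    mult_right_mono[OF bounded_approxD(2)[OF assms] H.hnorm_nonneg]
  by (rule order_trans)

lemma ncauchy_piw:
  assumes f: "bounded_approx N f X"
  shows "ncauchy (hnorm H) (\<lambda>k. piw (f k) x)"
proof (rule H.ncauchy_uniformly_bounded[of _ "real N" "lamw ` A0 D"])
  show "piw (f k) (x + y) = piw (f k) x + piw (f k) y" for k x y
    using H.bounded_op_add[OF bounded_op_piw[OF bounded_approxD(1)[OF f]]] .
  show "hnorm H (piw (f k) x) \<le> real N * hnorm H x" for k x
    by (rule hnorm_piw_approx_le[OF f])
  show "nclosure (hnorm H) (lamw ` A0 D) = UNIV"
    by (rule lamw_dense)
  fix d
  assume "d \<in> lamw ` A0 D"
  then obtain b where b: "b \<in> A0 D" "d = lamw b"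
    by blast
  define L where "L = nat \<lceil>n0A D b\<rceil>"
  have bL: "b \<in> A0N D L"
    unfolding L_def by (rule A0_in_A0N[OF b(1)])
  have "ncauchy (nA D) (\<lambda>k. mul (f k) b)"
  proof (rule ncauchy_dominated)
    show "ncauchy (nA D) f"
      by (rule nA.ntends_imp_ncauchy[OF bounded_approxD(4)[OF f]])
    then show "ncauchy (nA D) f" .
    have "nA D (mul (f i) b - mul (f j) b) \<le> real L * nA D (f i - f j)" for i j
      using nA_mul_diff_le[OF bounded_approxD(3)[OF f] bL b(1) bounded_approxD(1)[OF f]] by simp
    moreover have "real L * nA D (f i - f j) \<le> real L * (nA D (f i - f j) + nA D (f i - f j))" for i j
      by (intro mult_left_mono) (simp_all add: nA_nonneg)
    ultimately show "nA D (mul (f i) b - mul (f j) b) \<le> real L * (nA D (f i - f j) + nA D (f i - f j))"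
      for i j
      by (rule order_trans)
  qed simp
  then have "ncauchy (hnorm H) (\<lambda>k. lamw (mul (f k) b))"
    by (rule ncauchy_lamw[OF mul_A0N[OF bounded_approxD(3)[OF f] bL]])
  then show "ncauchy (hnorm H) (\<lambda>k. piw (f k) d)"
    using piw_lamw bounded_approxD(1)[OF f] b by simp
qed simp

(* By op_ext_pib, strong_lim f depends only on the limit of f. *)
definition strong_lim :: "(nat \<Rightarrow> 'a) \<Rightarrow> 'h \<Rightarrow> 'h" where
  "strong_lim f x = (THE y. ntends (hnorm H) (\<lambda>k. piw (f k) x) y)"

lemma strong_lim_eq:
  assumes "ntends (hnorm H) (\<lambda>k. piw (f k) x) y"
  shows "strong_lim f x = y"
  unfolding strong_lim_def using assms H.hn.ntends_unique by blast

lemma ntends_strong_lim: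
  assumes f: "bounded_approx N f X"
  shows "ntends (hnorm H) (\<lambda>k. piw (f k) x) (strong_lim f x)"
proof -
  obtain y where "ntends (hnorm H) (\<lambda>k. piw (f k) x) y"
    using ncauchy_piw[OF f] H.complete by blast
  then show ?thesis
    using strong_lim_eq by simp
qed

lemma strong_lim_const: "strong_lim (\<lambda>k. a) x = piw a x"
  by (rule strong_lim_eq) (rule H.hn.ntends_const)

lemma hnorm_strong_lim_le:
  assumes f: "bounded_approx N f X"
  shows "hnorm H (strong_lim f x) \<le> real N * hnorm H x"
  by (rule LIMSEQ_le_const2[OF H.hn.ntends_norm[OF ntends_strong_lim[OF f]]])
    (use hnorm_piw_approx_le[OF f] in simp)

lemma strong_lim_diff:
  assumes f: "bounded_approx N f X"
  shows "strong_lim f (x - y) = strong_lim f x - strong_lim f y"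
proof (rule strong_lim_eq)
  have "piw (f k) (x - y) = piw (f k) x - piw (f k) y" for k
    using H.bounded_op_diff[OF bounded_op_piw[OF bounded_approxD(1)[OF f]]] .
  then show "ntends (hnorm H) (\<lambda>k. piw (f k) (x - y)) (strong_lim f x - strong_lim f y)"
    using H.hn.ntends_diff[OF ntends_strong_lim[OF f] ntends_strong_lim[OF f]] by simp
qed

lemma strong_lim_ntends:
  assumes f: "bounded_approx N f X" and g: "ntends (hnorm H) g x"
  shows "ntends (hnorm H) (\<lambda>k. strong_lim f (g k)) (strong_lim f x)"
proof (rule H.hn.ntends_bound)
  show "hnorm H (strong_lim f (g k) - strong_lim f x) \<le> real N * hnorm H (g k - x)" for k
    using hnorm_strong_lim_le[OF f, of "g k - x"] strong_lim_diff[OF f] by simp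
  show "(\<lambda>k. real N * hnorm H (g k - x)) \<longlonglongrightarrow> 0"
    using g unfolding ntends_def by (rule tendsto_mult_right_zero)
qed

lemma ntends_piw_strong_lim:
  assumes f: "bounded_approx N f X" and x: "ntends (hnorm H) x v"
  shows "ntends (hnorm H) (\<lambda>k. piw (f k) (x k)) (strong_lim f v)"
proof (rule H.hn.ntends_bound)
  show "hnorm H (piw (f k) (x k) - strong_lim f v)
      \<le> real N * hnorm H (x k - v) + hnorm H (piw (f k) v - strong_lim f v)" for k
  proof -
    have split: "piw (f k) (x k) - strong_lim f v
        = piw (f k) (x k - v) + (piw (f k) v - strong_lim f v)"
      using H.bounded_op_diff[OF bounded_op_piw[OF bounded_approxD(1)[OF f]]] by simp
    have "hnorm H (piw (f k) (x k) - strong_lim f v)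
        \<le> hnorm H (piw (f k) (x k - v)) + hnorm H (piw (f k) v - strong_lim f v)"
      unfolding split by (rule H.hn.triangle)
    then show ?thesis
      using hnorm_piw_approx_le[OF f, of k "x k - v"] by linarith
  qed
  show "(\<lambda>k. real N * hnorm H (x k - v) + hnorm H (piw (f k) v - strong_lim f v)) \<longlonglongrightarrow> 0"
    using x ntends_strong_lim[OF f, of v] unfolding ntends_def
    by (intro tendsto_add_zero tendsto_mult_right_zero)
qed

lemma strong_lim_commute:
  assumes f: "bounded_approx N f X" and B: "bounded_op H B"
    and commute: "\<And>a x. a \<in> A0 D \<Longrightarrow> B (piw a x) = piw a (B x)"
  shows "B (strong_lim f x) = strong_lim f (B x)"
proof (rule strong_lim_eq[symmetric])
  have "ntends (hnorm H) (\<lambda>k. B (piw (f k) x)) (B (strong_lim f x))"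
    by (rule H.bounded_op_ntends[OF B ntends_strong_lim[OF f]])
  then show "ntends (hnorm H) (\<lambda>k. piw (f k) (B x)) (B (strong_lim f x))"
    using commute bounded_approxD(1)[OF f] by simp
qed

end

section \<open>Comparison with the GNS construction of the extension\<close>

locale cq_gns = cq_gns0 D \<omega> H lamw piw
  for D :: "('a::ab_group_add, 'b) cq_data_scheme" and \<omega> :: "'a \<Rightarrow> complex"
    and H :: "('h::ab_group_add, 'c) hspace_scheme" and lamw :: "'a \<Rightarrow> 'h" and piw :: "'a \<Rightarrow> 'h \<Rightarrow> 'h" +
  fixes K :: "('k::ab_group_add, 'd) hspace_scheme"
    and lamb :: "'a \<Rightarrow> 'k" and pib :: "'a \<Rightarrow> 'k \<Rightarrow> 'k"
  assumes GNS1: "is_GNS1 D \<omega> K lamb pib"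
begin

sublocale K: chilbert K
  using GNS1 by (simp add: is_GNS1_def chilbert_def)

lemma lamb_dense: "nclosure (hnorm K) (lamb ` A1 D) = UNIV"
  using GNS1 by (simp add: is_GNS1_def)

lemma hip_lamb:
  "X \<in> A1 D \<Longrightarrow> Y \<in> A1 D \<Longrightarrow> hip K (lamb X) (lamb Y) = omegabar D \<omega> (prod1 D (adj Y) X)"
  using GNS1 by (simp add: is_GNS1_def)

lemma pib_lamb: "X \<in> A1 D \<Longrightarrow> Y \<in> A1 D \<Longrightarrow> pib X (lamb Y) = lamb (prod1 D X Y)"
  using GNS1 by (simp add: is_GNS1_def)

lemma hip_lamw_tendsto_hip_lamb:
  assumes f: "bounded_approx N f X" and g: "bounded_approx N g Y"
  shows "(\<lambda>k. hip H (lamw (f k)) (lamw (g k))) \<longlonglongrightarrow> hip K (lamb X) (lamb Y)"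
proof -
  have "(\<lambda>k. \<omega> (mul (adj (g k)) (f k))) \<longlonglongrightarrow> omegabar D \<omega> (prod1 D (adj Y) X)"
  proof (rule omegabar_tendsto)
    show "mul (adj (g k)) (f k) \<in> A0 D" for k
      using bounded_approxD(1)[OF f] bounded_approxD(1)[OF g] by (simp add: A0_mul A0_adj)
    show "ntends (nA D) (\<lambda>k. mul (adj (g k)) (f k)) (prod1 D (adj Y) X)"
      by (rule ntends_prod1[OF bounded_approx_adj[OF g] f])
  qed
  moreover have "hip H (lamw (f k)) (lamw (g k)) = \<omega> (mul (adj (g k)) (f k))" for k
    using hip_lamw bounded_approxD(1)[OF f] bounded_approxD(1)[OF g] by simp
  moreover have "hip K (lamb X) (lamb Y) = omegabar D \<omega> (prod1 D (adj Y) X)"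
    using hip_lamb bounded_approx_A1[OF f] bounded_approx_A1[OF g] by simp
  ultimately show ?thesis
    by simp
qed

lemma hip_lamb_eq:
  assumes "bounded_approx N f X" "bounded_approx N g Y"
    and "ntends (hnorm H) (\<lambda>k. lamw (f k)) v" "ntends (hnorm H) (\<lambda>k. lamw (g k)) w"
  shows "hip K (lamb X) (lamb Y) = hip H v w"
  using hip_lamw_tendsto_hip_lamb[OF assms(1,2)] H.hip_tendsto[OF assms(3,4)] by (rule LIMSEQ_unique)

lemma hip_lamb_A0: "a \<in> A0 D \<Longrightarrow> b \<in> A0 D \<Longrightarrow> hip K (lamb a) (lamb b) = hip H (lamw a) (lamw b)"
proof -
  assume a: "a \<in> A0 D" and b: "b \<in> A0 D"
  define N where "N = max (nat \<lceil>n0A D a\<rceil>) (nat \<lceil>n0A D b\<rceil>)"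
  have "bounded_approx N (\<lambda>k. a) a"
    by (rule bounded_approx_mono[OF _ bounded_approx_const[OF A0_in_A0N[OF a]]]) (simp add: N_def)
  moreover have "bounded_approx N (\<lambda>k. b) b"
    by (rule bounded_approx_mono[OF _ bounded_approx_const[OF A0_in_A0N[OF b]]]) (simp add: N_def)
  ultimately show ?thesis
    by (rule hip_lamb_eq[OF _ _ H.hn.ntends_const H.hn.ntends_const])
qed

lemma ntends_lamb:
  assumes f: "bounded_approx N f X"
  shows "ntends (hnorm K) (\<lambda>k. lamb (f k)) (lamb X)"
proof -
  obtain v where v: "ntends (hnorm H) (\<lambda>k. lamw (f k)) v"
    using lamw_convergent[OF f] .
  have "hnorm K (lamb (f m) - lamb X) = hnorm H (lamw (f m) - v)" for m
  proof -
    have fm: "bounded_approx N (\<lambda>k. f m) (f m)"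
      using bounded_approx_const bounded_approxD(3)[OF f] .
    have c: "ntends (hnorm H) (\<lambda>k. lamw (f m)) (lamw (f m))"
      by (rule H.hn.ntends_const)
    show ?thesis
      by (rule hnorm_diff_eq_if_hip_eq)
        (simp_all add: hip_lamb_eq[OF fm fm c c] hip_lamb_eq[OF fm f c v] hip_lamb_eq[OF f fm v c]
          hip_lamb_eq[OF f f v v] H.chilbert_axioms K.chilbert_axioms)
  qed
  with v show ?thesis
    by (simp add: ntends_def)
qed

lemma lamb_A0_dense: "nclosure (hnorm K) (lamb ` A0 D) = UNIV"
proof (rule K.hn.nclosure_dense_trans[OF lamb_dense])
  show "lamb ` A1 D \<subseteq> nclosure (hnorm K) (lamb ` A0 D)"
  proof
    fix y
    assume "y \<in> lamb ` A1 D"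
    then obtain N f X where y: "y = lamb X" and f: "bounded_approx N f X"
      using A1_iff by blast
    have "\<forall>k. lamb (f k) \<in> lamb ` A0 D"
      using bounded_approxD(1)[OF f] by blast
    with ntends_lamb[OF f] show "y \<in> nclosure (hnorm K) (lamb ` A0 D)"
      unfolding nclosure_def y by (intro CollectI exI[of _ "\<lambda>k. lamb (f k)"] conjI)
  qed
qed

definition U :: "'h \<Rightarrow> 'k" where
  "U = (SOME U. hilbert_unitary H K U \<and> (\<forall>a\<in>A0 D. U (lamw a) = lamb a))"

lemma U_spec: "hilbert_unitary H K U \<and> (\<forall>a\<in>A0 D. U (lamw a) = lamb a)"
proof -
  interpret dense_isometry H K "A0 D" lamw lamb
    by unfold_locales (simp_all add: hip_lamb_A0 lamw_dense lamb_A0_dense)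
  show ?thesis
    unfolding U_def using extends_to_unitary by (rule someI_ex)
qed

sublocale U: hilbert_unitary H K U
  using U_spec by blast

lemma U_lamw: "a \<in> A0 D \<Longrightarrow> U (lamw a) = lamb a"
  using U_spec by blast

lemma pib_lamb_eq:
  assumes f: "bounded_approx N f X" and Y: "Y \<in> A1 D"
  shows "pib X (lamb Y) = U (strong_lim f (inv U (lamb Y)))"
proof -
  obtain M g where g: "bounded_approx M g Y"
    using Y A1_iff by blast
  define L where "L = max N M"
  have fL: "bounded_approx L f X" and gL: "bounded_approx L g Y"
    using bounded_approx_mono[OF _ f] bounded_approx_mono[OF _ g] by (simp_all add: L_def)
  have "inv U (lamb (g k)) = lamw (g k)" for k
    using U_lamw[OF bounded_approxD(1)[OF g]] U.inv_U_U by metis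
  then have "ntends (hnorm H) (\<lambda>k. lamw (g k)) (inv U (lamb Y))"
    using U.ntends_inv_U[OF ntends_lamb[OF g]] by simp
  then have "ntends (hnorm H) (\<lambda>k. piw (f k) (lamw (g k))) (strong_lim f (inv U (lamb Y)))"
    by (rule ntends_piw_strong_lim[OF f])
  then have "ntends (hnorm K) (\<lambda>k. U (piw (f k) (lamw (g k)))) (U (strong_lim f (inv U (lamb Y))))"
    by (rule U.ntends_U)
  moreover have "U (piw (f k) (lamw (g k))) = lamb (mul (f k) (g k))" for k
    using piw_lamw U_lamw A0_mul bounded_approxD(1)[OF f] bounded_approxD(1)[OF g] by simp
  ultimately have "ntends (hnorm K) (\<lambda>k. lamb (mul (f k) (g k))) (U (strong_lim f (inv U (lamb Y))))"
    by simp
  moreover have "ntends (hnorm K) (\<lambda>k. lamb (mul (f k) (g k))) (lamb (prod1 D X Y))"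
    by (rule ntends_lamb[OF bounded_approx_prod1[OF fL gL]])
  ultimately have "lamb (prod1 D X Y) = U (strong_lim f (inv U (lamb Y)))"
    using K.hn.ntends_unique by blast
  then show ?thesis
    using pib_lamb[OF bounded_approx_A1[OF f] Y] by simp
qed

lemma op_ext_pib:
  assumes f: "bounded_approx N f X"
  shows "op_ext K (pib X) (lamb ` A1 D) (U x) = U (strong_lim f x)"
proof -
  have lim: "ntends (hnorm K) (\<lambda>k. pib X (\<phi> k)) (U (strong_lim f x))"
    if \<phi>: "\<forall>k. \<phi> k \<in> lamb ` A1 D" "ntends (hnorm K) \<phi> (U x)" for \<phi>
  proof -
    have eq: "pib X (\<phi> k) = U (strong_lim f (inv U (\<phi> k)))" for k
    proof -
      obtain Y where "Y \<in> A1 D" "\<phi> k = lamb Y"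
        using \<phi>(1) by blast
      then show ?thesis
        by (simp add: pib_lamb_eq[OF f])
    qed
    have "ntends (hnorm H) (\<lambda>k. strong_lim f (inv U (\<phi> k))) (strong_lim f x)"
      using strong_lim_ntends[OF f U.ntends_inv_U[OF \<phi>(2)]] by simp
    then have "ntends (hnorm K) (\<lambda>k. U (strong_lim f (inv U (\<phi> k)))) (U (strong_lim f x))"
      by (rule U.ntends_U)
    then show ?thesis
      unfolding eq .
  qed
  obtain \<phi> where \<phi>: "\<forall>k. \<phi> k \<in> lamb ` A1 D" "ntends (hnorm K) \<phi> (U x)"
    using lamb_dense unfolding nclosure_def by blast
  show ?thesis
    unfolding op_ext_def
  proof (rule the_equality)
    show "\<exists>\<phi>. (\<forall>k. \<phi> k \<in> lamb ` A1 D) \<and> ntends (hnorm K) \<phi> (U x)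
        \<and> ntends (hnorm K) (\<lambda>k. pib X (\<phi> k)) (U (strong_lim f x))"
      using \<phi> lim by blast
  next
    fix y
    assume "\<exists>\<psi>. (\<forall>k. \<psi> k \<in> lamb ` A1 D) \<and> ntends (hnorm K) \<psi> (U x)
        \<and> ntends (hnorm K) (\<lambda>k. pib X (\<psi> k)) y"
    then show "y = U (strong_lim f x)"
      using lim K.hn.ntends_unique by blast
  qed
qed

lemma pib_bounded:
  assumes "X \<in> A1 D"
  shows "\<exists>C. \<forall>Y\<in>A1 D. hnorm K (pib X (lamb Y)) \<le> C * hnorm K (lamb Y)"
proof -
  obtain N f where f: "bounded_approx N f X"
    using assms A1_iff by blast
  have "hnorm K (pib X (lamb Y)) \<le> real N * hnorm K (lamb Y)" if "Y \<in> A1 D" for Y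
    using pib_lamb_eq[OF f that] hnorm_strong_lim_le[OF f, of "inv U (lamb Y)"]
      U.hnorm_U[of "inv U (lamb Y)"] U.hnorm_U[of "strong_lim f (inv U (lamb Y))"] by simp
  then show ?thesis
    by blast
qed

lemma op_ext_pib_A0: "A \<in> A0 D \<Longrightarrow> op_ext K (pib A) (lamb ` A1 D) (U x) = U (piw A x)"
  using op_ext_pib[OF bounded_approx_const[OF A0_in_A0N]] strong_lim_const by simp

lemma op_ext_pib_strong_approx:
  assumes "X \<in> A1 D"
  shows "\<exists>N f. (\<forall>k. f k \<in> A0N D N)
    \<and> (\<forall>x. ntends (hnorm K) (\<lambda>k. U (piw (f k) x)) (op_ext K (pib X) (lamb ` A1 D) (U x)))"
proof -
  obtain N f where f: "bounded_approx N f X"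
    using assms A1_iff by blast
  have "ntends (hnorm K) (\<lambda>k. U (piw (f k) x)) (op_ext K (pib X) (lamb ` A1 D) (U x))" for x
    unfolding op_ext_pib[OF f] by (rule U.ntends_U[OF ntends_strong_lim[OF f]])
  with bounded_approxD(3)[OF f] show ?thesis
    by blast
qed

lemma op_ext_pib_in_bicommutant:
  assumes "X \<in> A1 D"
  shows "in_bicommutant H (piw ` A0 D) (\<lambda>x. inv U (op_ext K (pib X) (lamb ` A1 D) (U x)))"
proof -
  obtain N f where f: "bounded_approx N f X"
    using assms A1_iff by blast
  show ?thesis
    unfolding in_bicommutant_def op_ext_pib[OF f] U.inv_U_U
    using strong_lim_commute[OF f] by blast
qed

lemma lamb_strong_approx:
  assumes "X \<in> A1 D"
  shows "\<exists>N f. (\<forall>k. f k \<in> A0N D N) \<and> ntends (hnorm K) (\<lambda>k. U (lamw (f k))) (lamb X)"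
proof -
  obtain N f where f: "bounded_approx N f X"
    using assms A1_iff by blast
  then have "ntends (hnorm K) (\<lambda>k. U (lamw (f k))) (lamb X)"
    using ntends_lamb U_lamw bounded_approxD(1) by simp
  with bounded_approxD(3)[OF f] show ?thesis
    by blast
qed

end

theorem proposition6p2:
  fixes D :: "'a::ab_group_add cq_data" and \<omega> :: "'a \<Rightarrow> complex"
    and H :: "'h::ab_group_add hspace" and lamw :: "'a \<Rightarrow> 'h" and piw :: "'a \<Rightarrow> 'h \<Rightarrow> 'h"
    and K :: "'k::ab_group_add hspace" and lamb :: "'a \<Rightarrow> 'k" and pib :: "'a \<Rightarrow> 'k \<Rightarrow> 'k"
  assumes "CQ_setting D" and "pos_functional D \<omega>"
    and "is_GNS0 D \<omega> H lamw piw" and "is_GNS1 D \<omega> K lamb pib"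
  shows "(\<forall>X\<in>A1 D. \<exists>C. \<forall>Y\<in>A1 D. hnorm K (pib X (lamb Y)) \<le> C * hnorm K (lamb Y))
    \<and> (\<exists>U. unitary_map H K U
        \<and> (\<forall>A\<in>A0 D. lamb A = U (lamw A))
        \<and> (\<forall>A\<in>A0 D. \<forall>x. op_ext K (pib A) (lamb ` A1 D) (U x) = U (piw A x))
        \<and> (\<forall>X\<in>A1 D. \<exists>N f. (\<forall>k. f k \<in> A0N D N) \<and>
             (\<forall>x. ntends (hnorm K) (\<lambda>k. U (piw (f k) x)) (op_ext K (pib X) (lamb ` A1 D) (U x))))
        \<and> (\<forall>X\<in>A1 D. in_bicommutant H (piw ` A0 D)
             (\<lambda>x. inv U (op_ext K (pib X) (lamb ` A1 D) (U x))))
        \<and> (\<forall>X\<in>A1 D. \<exists>N f. (\<forall>k. f k \<in> A0N D N) \<and> ntends (hnorm K) (\<lambda>k. U (lamw (f k))) (lamb X)))"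
proof -
  interpret cq_gns D \<omega> H lamw piw K lamb pib
    by unfold_locales (fact assms)+
  show ?thesis
    using pib_bounded U.unitary_map_U U_lamw op_ext_pib_A0 op_ext_pib_strong_approx
      op_ext_pib_in_bicommutant lamb_strong_approx
    by (intro conjI exI[of _ U]) auto
qed

end
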